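(* Let $\mathbf{X}=(X_n)_{n\ge0}$ be a real-valued second-order stationary process with covariance sequence $\sigma_X(h)$, let $(T_n)_{n\ge0}$ be a random walk independent of $\mathbf{X}$ with $T_0=0$ and i.i.d. increments $\Delta_j=T_j-T_{j-1}$ taking values in $\{1,2,\dots\}$ with common law $S$, and let $Y_n=X_{T_n}$, with covariance $\sigma_Y$. (i) Let $p\ge 1$. If $\sum_{h}|\sigma_X(h)|^p<\infty$, then $\sum_h|\sigma_Y(h)|^p<\infty$. (ii) If $p\in[1,2]$ and $\sum_h|\sigma_X(h)|^p<\infty$, then both $\mathbf{X}$ and $\mathbf{Y}$ have spectral densities $f_X,f_Y$, and $$f_Y(\lambda)=\frac{1}{2\pi}\sum_{j=-\infty}^{+\infty} e^{-ij\lambda}\int_{-\pi}^{\pi}\hat S(\theta)^{|j|}f_X(\theta)\,d\theta,$$ where $\hat S(\theta)=\mathbb{E}(e^{i\theta T_1})=\sum_{j\ge1}S(j)e^{ij\theta}$ and the series converges in $L^2([-\pi,\pi])$.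
   Context: Spectral densities are normalized so that $\sigma_X(h)=\int_{-\pi}^{\pi}e^{ih\lambda}f_X(\lambda)\,d\lambda$ (and likewise for $\mathbf{Y}$). The covariance of the sampled process satisfies $\sigma_Y(0)=\sigma_X(0)$ and $\sigma_Y(h)=\mathbb{E}(\sigma_X(T_h))$ for $h\ge1$. *)

theory Defs
  imports "HOL-Probability.Probability"
begin

definition second_order_stationary :: "'a measure \<Rightarrow> (nat \<Rightarrow> 'a \<Rightarrow> real) \<Rightarrow> bool" where
  "second_order_stationary M X \<longleftrightarrow>
     prob_space M \<and>
     (\<forall>n. X n \<in> borel_measurable M \<and> integrable M (\<lambda>\<omega>. (X n \<omega>)\<^sup>2)) \<and>
     (\<forall>n. integral\<^sup>L M (X n) = integral\<^sup>L M (X 0)) \<and>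
     (\<forall>m h. integral\<^sup>L M (\<lambda>\<omega>. (X m \<omega> - integral\<^sup>L M (X m)) * (X (m + h) \<omega> - integral\<^sup>L M (X (m + h))))
          = integral\<^sup>L M (\<lambda>\<omega>. (X 0 \<omega> - integral\<^sup>L M (X 0)) * (X h \<omega> - integral\<^sup>L M (X h))))"

definition autocov :: "'a measure \<Rightarrow> (nat \<Rightarrow> 'a \<Rightarrow> real) \<Rightarrow> int \<Rightarrow> real" where
  "autocov M X h =
     integral\<^sup>L M (\<lambda>\<omega>. (X 0 \<omega> - integral\<^sup>L M (X 0)) * (X (nat \<bar>h\<bar>) \<omega> - integral\<^sup>L M (X (nat \<bar>h\<bar>))))"

primrec walk_law :: "nat pmf \<Rightarrow> nat \<Rightarrow> nat pmf" where
  "walk_law S 0 = return_pmf 0"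
| "walk_law S (Suc n) = bind_pmf (walk_law S n) (\<lambda>t. map_pmf (\<lambda>d. t + d) S)"

text \<open>Covariance of the sampled process \<open>Y_n = X_{T_n}\<close>:
  \<open>\<sigma>_Y(0) = \<sigma>_X(0)\<close>, \<open>\<sigma>_Y(h) = E(\<sigma>_X(T_h))\<close> for \<open>h \<ge> 1\<close>, extended evenly to negative h.\<close>

definition sampled_cov :: "(int \<Rightarrow> real) \<Rightarrow> nat pmf \<Rightarrow> int \<Rightarrow> real" where
  "sampled_cov \<sigma> S h =
     (if h = 0 then \<sigma> 0
      else measure_pmf.expectation (walk_law S (nat \<bar>h\<bar>)) (\<lambda>k. \<sigma> (int k)))"

definition spectral_density :: "(int \<Rightarrow> real) \<Rightarrow> (real \<Rightarrow> real) \<Rightarrow> bool" where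
  "spectral_density \<sigma> f \<longleftrightarrow>
     set_integrable lborel {-pi..pi} f \<and>
     (\<forall>x\<in>{-pi..pi}. 0 \<le> f x) \<and>
     (\<forall>h::int. complex_of_real (\<sigma> h) =
         (\<integral>x\<in>{-pi..pi}. cis (real_of_int h * x) * complex_of_real (f x) \<partial>lborel))"

definition char_fun_S :: "nat pmf \<Rightarrow> real \<Rightarrow> complex" where
  "char_fun_S S \<theta> = (\<Sum>j. complex_of_real (pmf S j) * cis (real j * \<theta>))"

definition fY_partial :: "nat pmf \<Rightarrow> (real \<Rightarrow> real) \<Rightarrow> nat \<Rightarrow> real \<Rightarrow> complex" where
  "fY_partial S fX N t =
     complex_of_real (1 / (2 * pi)) *
     (\<Sum>j\<in>{-int N..int N}. cis (- real_of_int j * t) *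
        (\<integral>\<theta>\<in>{-pi..pi}. char_fun_S S \<theta> ^ nat \<bar>j\<bar> * complex_of_real (fX \<theta>) \<partial>lborel))"

end

theory Submission
  imports Defs
begin

(*
  (i) By Jensen's inequality |\<sigma>_Y(n)|^p \<le> E |\<sigma>_X(T_n)|^p = \<Sum>_k P(T_n = k) |\<sigma>_X(k)|^p.  The walk is
  strictly increasing, so it visits each k at most once: \<Sum>_n P(T_n = k) \<le> 1.  Summing over n
  therefore gives \<Sum>_n |\<sigma>_Y(n)|^p \<le> |\<sigma>_X(0)|^p + \<Sum>_k |\<sigma>_X(k)|^p.

  (ii) For p \<le> 2 a bounded p-summable sequence is square summable, so (Riesz-Fischer) there is an
  L\<^sup>2 function f whose Fourier series with coefficients \<sigma>/(2\<pi>) converges to f in L\<^sup>2.  If \<sigma> is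
  positive definite, its Fejer means are nonnegative and converge to f in L\<^sup>2, hence f \<ge> 0 a.e.
  and f is a spectral density.  For \<sigma>_X positive definiteness comes from the covariance
  structure.  Inserting the spectral representation into E \<sigma>_X(T_n) gives
  \<sigma>_Y(n) = \<integral> hat S(\<theta>)^n f_X(\<theta>) d\<theta>, which is exactly the coefficient in the formula for f_Y; and
  since the Toeplitz matrix (z^(a-b))_{a,b}, with conjugate powers below the diagonal, is
  positive semidefinite for |z| \<le> 1, \<sigma>_Y is positive definite too.
*)

section \<open>The random walk\<close>

lemma expectation_pmf_nat_bounded:
  fixes g :: "nat \<Rightarrow> 'b::{banach,second_countable_topology}"
  assumes "\<And>k. norm (g k) \<le> B"
  shows "measure_pmf.expectation p g = (\<Sum>k. pmf p k *\<^sub>R g k)"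
    and "summable (\<lambda>k. norm (pmf p k *\<^sub>R g k))"
proof -
  have "integrable (measure_pmf p) g"
    by (rule measure_pmf.integrable_const_bound[where B=B]) (use assms in auto)
  then have int: "integrable (count_space UNIV) (\<lambda>k. pmf p k *\<^sub>R g k)"
    unfolding measure_pmf_eq_density
    by (subst (asm) integrable_density) auto
  show "measure_pmf.expectation p g = (\<Sum>k. pmf p k *\<^sub>R g k)"
    unfolding measure_pmf_eq_density
    by (subst integral_density) (auto intro!: integral_count_space_nat int)
  show "summable (\<lambda>k. norm (pmf p k *\<^sub>R g k))"
    using int by (simp add: integrable_count_space_nat_iff)
qed

lemma walk_law_Suc_left:
  "walk_law S (Suc n) = bind_pmf S (\<lambda>d. map_pmf (\<lambda>t. t + d) (walk_law S n))"
proof (induction n)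
  case 0
  then show ?case by (simp add: map_pmf_def bind_return_pmf bind_return_pmf')
next
  case (Suc n)
  have "walk_law S (Suc (Suc n)) = bind_pmf (walk_law S (Suc n)) (\<lambda>t. map_pmf (\<lambda>d. t + d) S)"
    by simp
  also have "\<dots> = bind_pmf (bind_pmf S (\<lambda>d. map_pmf (\<lambda>t. t + d) (walk_law S n)))
      (\<lambda>t. map_pmf (\<lambda>d. t + d) S)"
    using Suc by simp
  also have "\<dots> = bind_pmf S (\<lambda>d. map_pmf (\<lambda>t. t + d) (walk_law S (Suc n)))"
    by (simp add: bind_assoc_pmf map_pmf_def bind_return_pmf add_ac)
  finally show ?case .
qed

lemma pmf_map_add_nat:
  fixes d k :: nat
  shows "pmf (map_pmf (\<lambda>t. t + d) q) k = (if d \<le> k then pmf q (k - d) else 0)"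
proof (cases "d \<le> k")
  case True
  have "pmf (map_pmf (\<lambda>t. t + d) q) ((k - d) + d) = pmf q (k - d)"
    by (rule pmf_map_inj') (auto simp: inj_def)
  then show ?thesis using True by simp
next
  case False
  then have "k \<notin> set_pmf (map_pmf (\<lambda>t. t + d) q)" by auto
  then show ?thesis using False by (simp add: pmf_eq_0_set_pmf)
qed

lemma pmf_walk_law_Suc:
  "pmf (walk_law S (Suc n)) k = (\<Sum>d\<le>k. pmf S d * pmf (walk_law S n) (k - d))"
proof -
  have "pmf (walk_law S (Suc n)) k =
      measure_pmf.expectation S (\<lambda>d. if d \<le> k then pmf (walk_law S n) (k - d) else 0)"
    unfolding walk_law_Suc_left pmf_bind pmf_map_add_nat ..
  also have "\<dots> = (\<Sum>d\<le>k. pmf S d *\<^sub>R (if d \<le> k then pmf (walk_law S n) (k - d) else 0))"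
    by (rule integral_measure_pmf) (auto split: if_splits)
  finally show ?thesis by simp
qed

lemma walk_law_visits_le_1:
  assumes "pmf S 0 = 0"
  shows "(\<Sum>n<M. pmf (walk_law S n) k) \<le> 1"
proof (induction M arbitrary: k)
  case 0
  then show ?case by simp
next
  case (Suc M)
  have "(\<Sum>n<Suc M. pmf (walk_law S n) k) =
      pmf (walk_law S 0) k + (\<Sum>n<M. pmf (walk_law S (Suc n)) k)"
    by (subst sum.lessThan_Suc_shift) simp
  also have "(\<Sum>n<M. pmf (walk_law S (Suc n)) k) =
      (\<Sum>d\<le>k. pmf S d * (\<Sum>n<M. pmf (walk_law S n) (k - d)))"
    by (simp only: pmf_walk_law_Suc sum_distrib_left sum.swap[of _ "{..<M}"])
  finally have eq: "(\<Sum>n<Suc M. pmf (walk_law S n) k) =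
      pmf (return_pmf 0) k + (\<Sum>d\<le>k. pmf S d * (\<Sum>n<M. pmf (walk_law S n) (k - d)))"
    by simp
  have le: "(\<Sum>d\<le>k. pmf S d * (\<Sum>n<M. pmf (walk_law S n) (k - d))) \<le> (\<Sum>d\<le>k. pmf S d)"
    by (intro sum_mono mult_right_le_one_le) (auto intro!: sum_nonneg Suc.IH)
  show ?case
  proof (cases "k = 0")
    case True
    then show ?thesis using eq assms by simp
  next
    case False
    have "(\<Sum>d\<le>k. pmf S d) = measure_pmf.prob S {..k}"
      by (simp add: measure_measure_pmf_finite)
    also have "\<dots> \<le> 1" by simp
    finally show ?thesis using eq le False by (simp add: pmf_return)
  qed
qed

declare walk_law.simps(2)[simp del]

section \<open>Summability of the sampled covariances\<close>

lemma summable_on_int_if_even: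
  fixes g :: "int \<Rightarrow> real"
  assumes "\<And>h. g (-h) = g h" and "summable (\<lambda>n. g (int n))" and "\<And>h. g h \<ge> 0"
  shows "g summable_on UNIV"
proof -
  have nat: "(g \<circ> int) summable_on UNIV"
    using assms by (intro summable_nonneg_imp_summable_on) (auto simp: o_def)
  then have pos: "g summable_on (range int)"
    by (subst summable_on_reindex) (auto simp: inj_on_def)
  have "(g \<circ> (\<lambda>n. - int n)) summable_on UNIV"
    using nat assms(1) by (simp add: o_def)
  then have neg: "g summable_on (range (\<lambda>n. - int n))"
    by (subst summable_on_reindex) (auto simp: inj_on_def)
  have "range int \<union> range (\<lambda>n. - int n) = (UNIV :: int set)"
  proof -
    have "x \<in> range int \<union> range (\<lambda>n. - int n)" for x :: int
      by (cases "x \<ge> 0") (auto intro: image_eqI[of x int "nat x"] image_eqI[of x _ "nat (-x)"])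
    then show ?thesis by blast
  qed
  then show ?thesis using summable_on_union[OF pos neg] by simp
qed

lemma summable_on_int_imp_summable_nat:
  fixes g :: "int \<Rightarrow> real"
  assumes "g summable_on UNIV"
  shows "summable (\<lambda>n. g (int n))"
proof -
  have "g summable_on (range int)" by (rule summable_on_subset[OF assms]) auto
  then have "(g \<circ> int) summable_on UNIV"
    by (subst (asm) summable_on_reindex) (auto simp: inj_on_def)
  then show ?thesis by (auto dest: summable_on_imp_summable simp: o_def)
qed

lemma convex_on_abs_powr:
  fixes p :: real
  assumes "p \<ge> 1"
  shows "convex_on UNIV (\<lambda>x::real. \<bar>x\<bar> powr p)"
proof (rule convex_onI)
  fix t x y :: real
  assume t: "0 < t" "t < 1"
  have scale: "(s * a) powr p \<le> s * a powr p" if "0 \<le> s" "s \<le> 1" "0 \<le> a" for s a :: real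
  proof -
    have "s powr p \<le> s"
      using powr_mono'[of 1 p s] that assms by (cases "s = 0") auto
    then show ?thesis using that by (simp add: powr_mult mult_right_mono)
  qed
  have conv: "(t * a + (1 - t) * b) powr p \<le> t * a powr p + (1 - t) * b powr p"
    if "a \<ge> 0" "b \<ge> 0" for a b :: real
  proof (cases "a = 0 \<or> b = 0")
    case True
    then show ?thesis using scale[of "1 - t" b] scale[of t a] t that by auto
  next
    case False
    then have "a > 0" "b > 0" using that by auto
    then show ?thesis using convex_onD[OF powr_convex[OF assms], of "1 - t" a b] t
      by (simp add: algebra_simps)
  qed
  have "\<bar>(1 - t) *\<^sub>R x + t *\<^sub>R y\<bar> powr p \<le> ((1 - t) * \<bar>x\<bar> + t * \<bar>y\<bar>) powr p"
    using t assms
    by (intro powr_mono2) (auto simp: abs_mult intro: abs_triangle_ineq[THEN order_trans])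
  also have "\<dots> \<le> (1 - t) * \<bar>x\<bar> powr p + t * \<bar>y\<bar> powr p"
    using conv[of "\<bar>y\<bar>" "\<bar>x\<bar>"] by (simp add: algebra_simps)
  finally show "\<bar>(1 - t) *\<^sub>R x + t *\<^sub>R y\<bar> powr p \<le> (1 - t) * \<bar>x\<bar> powr p + t * \<bar>y\<bar> powr p" .
qed (simp add: convex_UNIV)

lemma sampled_cov_even: "sampled_cov \<sigma> S (-h) = sampled_cov \<sigma> S h"
  by (simp add: sampled_cov_def)

lemma abs_sampled_cov_le:
  fixes \<sigma> :: "int \<Rightarrow> real"
  assumes "\<And>h. \<bar>\<sigma> h\<bar> \<le> B"
  shows "\<bar>sampled_cov \<sigma> S h\<bar> \<le> B"
proof (cases "h = 0")
  case True
  then show ?thesis using assms by (simp add: sampled_cov_def)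
next
  case False
  let ?p = "walk_law S (nat \<bar>h\<bar>)"
  have "\<bar>measure_pmf.expectation ?p (\<lambda>k. \<sigma> (int k))\<bar> \<le> measure_pmf.expectation ?p (\<lambda>k. \<bar>\<sigma> (int k)\<bar>)"
    by (rule integral_abs_bound)
  also have "\<dots> \<le> measure_pmf.expectation ?p (\<lambda>k. B)"
    by (rule integral_mono) (use assms in \<open>auto intro: measure_pmf.integrable_const_bound[where B=B]\<close>)
  finally show ?thesis using False by (simp add: sampled_cov_def)
qed

lemma abs_sampled_cov_powr_le:
  fixes \<sigma> :: "int \<Rightarrow> real"
  assumes bnd: "\<And>h. \<bar>\<sigma> h\<bar> \<le> B" and p: "p \<ge> 1" and n: "n \<ge> 1"
  shows "\<bar>sampled_cov \<sigma> S (int n)\<bar> powr p \<le> (\<Sum>k. pmf (walk_law S n) k * \<bar>\<sigma> (int k)\<bar> powr p)"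
proof -
  have bnd_p: "norm (\<bar>\<sigma> (int k)\<bar> powr p) \<le> B powr p" for k
    using bnd[of "int k"] p by (auto intro!: powr_mono2)
  have "\<bar>sampled_cov \<sigma> S (int n)\<bar> powr p =
      \<bar>measure_pmf.expectation (walk_law S n) (\<lambda>k. \<sigma> (int k))\<bar> powr p"
    using n by (simp add: sampled_cov_def)
  also have "\<dots> \<le> measure_pmf.expectation (walk_law S n) (\<lambda>k. \<bar>\<sigma> (int k)\<bar> powr p)"
  proof (rule measure_pmf.jensens_inequality[where I=UNIV])
    show "integrable (measure_pmf (walk_law S n)) (\<lambda>k. \<sigma> (int k))"
      by (rule measure_pmf.integrable_const_bound[where B=B]) (use bnd in auto)
    show "integrable (measure_pmf (walk_law S n)) (\<lambda>k. \<bar>\<sigma> (int k)\<bar> powr p)"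
      by (rule measure_pmf.integrable_const_bound[where B="B powr p"]) (use bnd_p in auto)
  qed (use convex_on_abs_powr[OF p] in auto)
  also have "\<dots> = (\<Sum>k. pmf (walk_law S n) k *\<^sub>R \<bar>\<sigma> (int k)\<bar> powr p)"
    by (rule expectation_pmf_nat_bounded(1)) (rule bnd_p)
  finally show ?thesis by simp
qed

lemma sum_abs_sampled_cov_powr_le:
  fixes \<sigma> :: "int \<Rightarrow> real"
  assumes bnd: "\<And>h. \<bar>\<sigma> h\<bar> \<le> B" and S0: "pmf S 0 = 0" and p: "p \<ge> 1"
    and sum: "summable (\<lambda>k. \<bar>\<sigma> (int k)\<bar> powr p)"
  shows "(\<Sum>n<M. \<bar>sampled_cov \<sigma> S (int (Suc n))\<bar> powr p) \<le> (\<Sum>k. \<bar>\<sigma> (int k)\<bar> powr p)"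
proof -
  let ?a = "\<lambda>k. \<bar>\<sigma> (int k)\<bar> powr p"
  have "norm (?a k) \<le> B powr p" for k
    using bnd[of "int k"] p by (auto intro!: powr_mono2)
  then have summable_weighted: "summable (\<lambda>k. pmf (walk_law S n) k * ?a k)" for n
    using expectation_pmf_nat_bounded(2)[of ?a "B powr p" "walk_law S n"] by simp
  have "(\<Sum>n<M. \<bar>sampled_cov \<sigma> S (int (Suc n))\<bar> powr p) \<le>
      (\<Sum>n<M. \<Sum>k. pmf (walk_law S (Suc n)) k * ?a k)"
    by (intro sum_mono abs_sampled_cov_powr_le[OF bnd p]) auto
  also have "\<dots> = (\<Sum>k. \<Sum>n<M. pmf (walk_law S (Suc n)) k * ?a k)"
    by (rule suminf_sum[symmetric]) (use summable_weighted in auto)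
  also have "\<dots> \<le> (\<Sum>k. ?a k)"
  proof (rule suminf_le)
    fix k
    have "(\<Sum>n<M. pmf (walk_law S (Suc n)) k) \<le> (\<Sum>n<Suc M. pmf (walk_law S n) k)"
      by (subst sum.lessThan_Suc_shift) simp
    also have "\<dots> \<le> 1" by (rule walk_law_visits_le_1[OF S0])
    finally show "(\<Sum>n<M. pmf (walk_law S (Suc n)) k * ?a k) \<le> ?a k"
      by (simp add: sum_distrib_right[symmetric] mult_left_le_one_le sum_nonneg)
  qed (use summable_weighted sum in \<open>auto intro: summable_sum\<close>)
  finally show ?thesis .
qed

lemma sampled_cov_powr_summable:
  fixes \<sigma> :: "int \<Rightarrow> real"
  assumes bnd: "\<And>h. \<bar>\<sigma> h\<bar> \<le> B" and S0: "pmf S 0 = 0" and p: "p \<ge> 1"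
    and sum: "(\<lambda>h. \<bar>\<sigma> h\<bar> powr p) summable_on UNIV"
  shows "(\<lambda>h. \<bar>sampled_cov \<sigma> S h\<bar> powr p) summable_on UNIV"
proof (rule summable_on_int_if_even)
  let ?b = "\<lambda>n. \<bar>sampled_cov \<sigma> S (int n)\<bar> powr p"
  have sum_nat: "summable (\<lambda>k. \<bar>\<sigma> (int k)\<bar> powr p)"
    by (rule summable_on_int_imp_summable_nat[OF sum])
  show "summable ?b"
  proof (rule summableI_nonneg_bounded[where x="?b 0 + (\<Sum>k. \<bar>\<sigma> (int k)\<bar> powr p)"])
    fix M
    show "sum ?b {..<M} \<le> ?b 0 + (\<Sum>k. \<bar>\<sigma> (int k)\<bar> powr p)"
    proof (cases M)
      case 0
      then show ?thesis using sum_nat by (simp add: suminf_nonneg)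
    next
      case (Suc M')
      have "sum ?b {..<M} = ?b 0 + (\<Sum>n<M'. ?b (Suc n))"
        unfolding Suc by (subst sum.lessThan_Suc_shift) simp
      then show ?thesis
        using sum_abs_sampled_cov_powr_le[OF bnd S0 p sum_nat, of M'] by simp
    qed
  qed simp
qed (simp_all add: sampled_cov_even)

section \<open>Trigonometric polynomials\<close>

lemma has_integral_cis_of_int:
  fixes m :: int
  shows "((\<lambda>x. cis (real_of_int m * x)) has_integral (if m = 0 then complex_of_real (2*pi) else 0))
    {-pi..pi}"
proof (cases "m = 0")
  case True
  then show ?thesis using has_integral_const_real[of "1::complex" "-pi" pi]
    by (simp add: scaleR_conv_of_real)
next
  case False
  define F where "F x = cis (real_of_int m * x) / (\<i> * of_int m)" for x
  have "(F has_vector_derivative cis (real_of_int m * x)) (at x within {-pi..pi})" for x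
  proof -
    have "((\<lambda>z. exp (\<i> * of_int m * z) / (\<i> * of_int m)) has_field_derivative
        exp (\<i> * of_int m * of_real x)) (at (of_real x))"
      using False by (auto intro!: derivative_eq_intros)
    from has_vector_derivative_real_field[OF this] show ?thesis
      unfolding F_def cis_conv_exp by (auto intro: has_vector_derivative_at_within simp: mult_ac)
  qed
  then have "((\<lambda>x. cis (real_of_int m * x)) has_integral (F pi - F (-pi))) {-pi..pi}"
    by (intro fundamental_theorem_of_calculus) auto
  moreover have "cis (real_of_int m * pi) = cis (real_of_int m * (-pi)) * cis (2 * pi * real_of_int m)"
    by (simp add: cis_mult algebra_simps)
  then have "F pi = F (-pi)"
    by (simp add: F_def cis_multiple_2pi)
  ultimately show ?thesis using False by simp
qed

lemma norm_sum_cis_squared: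
  fixes a :: "int \<Rightarrow> complex"
  shows "complex_of_real ((cmod (\<Sum>h\<in>H. a h * cis (real_of_int h * x)))\<^sup>2) =
    (\<Sum>h\<in>H. \<Sum>k\<in>H. (a h * cnj (a k)) * cis (real_of_int (h - k) * x))"
proof -
  have "complex_of_real ((cmod (\<Sum>h\<in>H. a h * cis (real_of_int h * x)))\<^sup>2) =
      (\<Sum>h\<in>H. a h * cis (real_of_int h * x)) * cnj (\<Sum>k\<in>H. a k * cis (real_of_int k * x))"
    by (rule complex_norm_square)
  also have "\<dots> = (\<Sum>h\<in>H. \<Sum>k\<in>H. (a h * cis (real_of_int h * x)) * (cnj (a k) * cis (- (real_of_int k * x))))"
    by (simp add: sum_distrib_left sum_distrib_right cis_cnj, rule sum.swap)
  also have "\<dots> = (\<Sum>h\<in>H. \<Sum>k\<in>H. (a h * cnj (a k)) * cis (real_of_int (h - k) * x))"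
  proof (intro sum.cong refl)
    fix h k
    have "cis (real_of_int h * x) * cis (- (real_of_int k * x)) = cis (real_of_int (h - k) * x)"
      by (simp add: cis_mult algebra_simps)
    then show "(a h * cis (real_of_int h * x)) * (cnj (a k) * cis (- (real_of_int k * x))) =
        (a h * cnj (a k)) * cis (real_of_int (h - k) * x)"
      by (metis (no_types, lifting) mult.assoc mult.left_commute)
  qed
  finally show ?thesis .
qed

lemma parseval_has_integral:
  fixes a :: "int \<Rightarrow> complex"
  assumes "finite H"
  shows "((\<lambda>x. (cmod (\<Sum>h\<in>H. a h * cis (real_of_int h * x)))\<^sup>2) has_integral
           (2 * pi * (\<Sum>h\<in>H. (cmod (a h))\<^sup>2))) {-pi..pi}"
proof -
  have "((\<lambda>x. \<Sum>h\<in>H. \<Sum>k\<in>H. (a h * cnj (a k)) * cis (real_of_int (h - k) * x)) has_integral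
      (\<Sum>h\<in>H. \<Sum>k\<in>H. (a h * cnj (a k)) * (if h - k = 0 then complex_of_real (2*pi) else 0))) {-pi..pi}"
    by (intro has_integral_sum assms has_integral_mult_right has_integral_cis_of_int)
  also have "(\<Sum>h\<in>H. \<Sum>k\<in>H. (a h * cnj (a k)) * (if h - k = 0 then complex_of_real (2*pi) else 0))
      = (\<Sum>h\<in>H. (a h * cnj (a h)) * complex_of_real (2*pi))"
  proof (intro sum.cong refl)
    fix h
    assume "h \<in> H"
    have "(\<Sum>k\<in>H. (a h * cnj (a k)) * (if h - k = 0 then complex_of_real (2*pi) else 0))
        = (\<Sum>k\<in>H. if k = h then (a h * cnj (a k)) * complex_of_real (2*pi) else 0)"
      by (intro sum.cong refl) auto
    then show "(\<Sum>k\<in>H. (a h * cnj (a k)) * (if h - k = 0 then complex_of_real (2*pi) else 0))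
        = (a h * cnj (a h)) * complex_of_real (2*pi)"
      using \<open>h \<in> H\<close> assms by (simp add: sum.delta)
  qed
  also have "\<dots> = complex_of_real (2 * pi * (\<Sum>h\<in>H. (cmod (a h))\<^sup>2))"
    by (simp add: complex_norm_square[symmetric] sum_distrib_left sum_distrib_right mult_ac
        del: of_real_power)
  finally have "((\<lambda>x. complex_of_real ((cmod (\<Sum>h\<in>H. a h * cis (real_of_int h * x)))\<^sup>2)) has_integral
      complex_of_real (2 * pi * (\<Sum>h\<in>H. (cmod (a h))\<^sup>2))) {-pi..pi}"
    by (simp only: norm_sum_cis_squared)
  from has_integral_linear[OF this bounded_linear_Re] show ?thesis
    by (simp add: o_def)
qed

definition trig_poly :: "(int \<Rightarrow> real) \<Rightarrow> nat \<Rightarrow> real \<Rightarrow> complex" where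
  "trig_poly a N x = (\<Sum>h\<in>{-int N..int N}. complex_of_real (a h) * cis (real_of_int h * x))"

definition trunc_coeffs :: "nat \<Rightarrow> (int \<Rightarrow> real) \<Rightarrow> int \<Rightarrow> real" where
  "trunc_coeffs N a h = (if \<bar>h\<bar> \<le> int N then a h else 0)"

lemma trig_poly_trunc_coeffs: "N \<le> K \<Longrightarrow> trig_poly a N x = trig_poly (trunc_coeffs N a) K x"
  unfolding trig_poly_def trunc_coeffs_def by (rule sum.mono_neutral_cong_left) auto

lemma trig_poly_diff: "trig_poly a K x - trig_poly b K x = trig_poly (\<lambda>h. a h - b h) K x"
  unfolding trig_poly_def by (simp add: sum_subtractf[symmetric] algebra_simps)

lemma trig_poly_real:
  assumes "\<And>h. a (-h) = a h"
  shows "trig_poly a K x = complex_of_real (Re (trig_poly a K x))"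
proof -
  have "cnj (trig_poly a K x) =
      (\<Sum>h\<in>{-int K..int K}. complex_of_real (a h) * cis (- (real_of_int h * x)))"
    unfolding trig_poly_def by (simp add: cis_cnj)
  also have "\<dots> = trig_poly a K x"
    unfolding trig_poly_def
    by (rule sum.reindex_bij_witness[where i=uminus and j=uminus]) (auto simp: assms)
  finally have "Im (cnj (trig_poly a K x)) = Im (trig_poly a K x)" by simp
  then have "Im (trig_poly a K x) = 0" by simp
  then show ?thesis by (simp add: complex_eq_iff)
qed

lemma continuous_on_trig_poly: "continuous_on A (trig_poly a K)"
  unfolding trig_poly_def by (intro continuous_intros)

lemma borel_measurable_trig_poly[measurable]: "trig_poly a K \<in> borel_measurable borel"
  by (intro borel_measurable_continuous_onI continuous_on_trig_poly)

lemma borel_measurable_cis_mult[measurable]: "(\<lambda>x::real. cis (r * x)) \<in> borel_measurable borel"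
  by (intro borel_measurable_continuous_onI continuous_intros)

lemma nn_integral_trig_poly_dist:
  "(\<integral>\<^sup>+x\<in>{-pi..pi}. ennreal ((cmod (trig_poly a K x - trig_poly b K x))\<^sup>2) \<partial>lborel)
     = ennreal (2 * pi * (\<Sum>h\<in>{-int K..int K}. (a h - b h)\<^sup>2))"
proof -
  have "cmod (complex_of_real u - complex_of_real v) = \<bar>u - v\<bar>" for u v
    by (metis norm_of_real of_real_diff)
  then show ?thesis
    unfolding trig_poly_diff unfolding trig_poly_def
    using nn_integral_has_integral_lebesgue'[OF _ parseval_has_integral[where
          H="{-int K..int K}" and a="\<lambda>h. complex_of_real (a h - b h)"]]
    by simp
qed

lemma set_integral_cis_trig_poly:
  fixes a :: "int \<Rightarrow> real"
  assumes "\<bar>h\<bar> \<le> int N"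
  shows "(LINT x:{-pi..pi}|lborel. cis (real_of_int h * x) * trig_poly a N x) =
    complex_of_real (2 * pi * a (-h))"
proof -
  have "((\<lambda>x. \<Sum>k\<in>{-int N..int N}. complex_of_real (a k) * cis (real_of_int (k + h) * x)) has_integral
      (\<Sum>k\<in>{-int N..int N}. complex_of_real (a k) * (if k + h = 0 then complex_of_real (2*pi) else 0)))
      {-pi..pi}"
    by (intro has_integral_sum has_integral_mult_right has_integral_cis_of_int) auto
  also have "(\<Sum>k\<in>{-int N..int N}. complex_of_real (a k) * (if k + h = 0 then complex_of_real (2*pi) else 0))
      = (\<Sum>k\<in>{-int N..int N}. if k = -h then complex_of_real (a k) * complex_of_real (2*pi) else 0)"
    by (intro sum.cong refl) auto
  also have "\<dots> = complex_of_real (2 * pi * a (-h))"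
    using assms by (subst sum.delta) auto
  also have "(\<lambda>x. \<Sum>k\<in>{-int N..int N}. complex_of_real (a k) * cis (real_of_int (k + h) * x)) =
      (\<lambda>x. cis (real_of_int h * x) * trig_poly a N x)"
    unfolding trig_poly_def sum_distrib_left
    by (intro ext sum.cong refl) (simp add: cis_mult[symmetric] algebra_simps)
  finally have integral: "((\<lambda>x. cis (real_of_int h * x) * trig_poly a N x) has_integral
      complex_of_real (2 * pi * a (-h))) {-pi..pi}" .
  have integrable: "set_integrable lborel {-pi..pi} (\<lambda>x. cis (real_of_int h * x) * trig_poly a N x)"
    by (intro borel_integrable_atLeastAtMost' continuous_intros continuous_on_trig_poly)
  show ?thesis
    using set_borel_integral_eq_integral(2)[OF integrable] integral by (simp add: integral_unique)
qed

lemma sum_int_interval_even: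
  fixes g :: "int \<Rightarrow> 'b::comm_monoid_add"
  assumes "\<And>h. g (-h) = g h"
  shows "(\<Sum>h\<in>{-int K..int K}. g h) = g 0 + ((\<Sum>n\<in>{1..K}. g (int n)) + (\<Sum>n\<in>{1..K}. g (int n)))"
proof -
  have split: "{-int K..int K} = {0} \<union> (int ` {1..K} \<union> (\<lambda>n. - int n) ` {1..K})"
  proof (intro equalityI subsetI)
    fix x
    assume x: "x \<in> {-int K..int K}"
    consider "x = 0" | "x > 0" | "x < 0" by linarith
    then show "x \<in> {0} \<union> (int ` {1..K} \<union> (\<lambda>n. - int n) ` {1..K})"
    proof cases
      case 2
      then have "x = int (nat x)" "nat x \<in> {1..K}" using x by auto
      then show ?thesis by blast
    next
      case 3
      then have "x = - int (nat (-x))" "nat (-x) \<in> {1..K}" using x by auto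
      then show ?thesis by blast
    qed simp
  qed auto
  have "(\<Sum>h\<in>{-int K..int K}. g h) = g 0 + (\<Sum>h\<in>int ` {1..K} \<union> (\<lambda>n. - int n) ` {1..K}. g h)"
    unfolding split by (subst sum.union_disjoint) auto
  also have "\<dots> = g 0 + ((\<Sum>h\<in>int ` {1..K}. g h) + (\<Sum>h\<in>(\<lambda>n. - int n) ` {1..K}. g h))"
    by (subst sum.union_disjoint) auto
  also have "(\<Sum>h\<in>int ` {1..K}. g h) = (\<Sum>n\<in>{1..K}. g (int n))"
    by (subst sum.reindex) (auto simp: inj_on_def)
  also have "(\<Sum>h\<in>(\<lambda>n. - int n) ` {1..K}. g h) = (\<Sum>n\<in>{1..K}. g (int n))"
    by (subst sum.reindex) (auto simp: inj_on_def assms)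
  finally show ?thesis .
qed

lemma sum_trunc_coeffs_dist_even:
  fixes a b :: "int \<Rightarrow> real"
  assumes "\<And>h. a (-h) = a h" "\<And>h. b (-h) = b h"
  shows "(\<Sum>h\<in>{-int K..int K}. (trunc_coeffs N a h - b h)\<^sup>2) =
      2 * (\<Sum>n\<in>{1..K}. (trunc_coeffs N a (int n) - b (int n))\<^sup>2) + (a 0 - b 0)\<^sup>2"
  using sum_int_interval_even[of "\<lambda>h. (trunc_coeffs N a h - b h)\<^sup>2" K] assms
  by (simp add: trunc_coeffs_def)

lemma double_sum_of_diff:
  fixes F :: "int \<Rightarrow> 'a::comm_ring_1"
  shows "(\<Sum>a<N. \<Sum>b<N. F (int a - int b)) = (\<Sum>h\<in>{-int N..int N}. of_int (int N - \<bar>h\<bar>) * F h)"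
proof (induction N)
  case 0
  then show ?case by simp
next
  case (Suc N)
  have upper: "(\<Sum>b<N. F (int N - int b)) = (\<Sum>h\<in>{1..int N}. F h)"
    by (rule sum.reindex_bij_witness[where i="\<lambda>h. nat (int N - h)" and j="\<lambda>b. int N - int b"]) auto
  have lower: "(\<Sum>a<N. F (int a - int N)) = (\<Sum>h\<in>{-int N..-1}. F h)"
    by (rule sum.reindex_bij_witness[where i="\<lambda>h. nat (h + int N)" and j="\<lambda>a. int a - int N"]) auto
  have "{-int N..int N} = {-int N..-1} \<union> ({0} \<union> {1..int N})" by auto
  then have all: "(\<Sum>h\<in>{-int N..int N}. F h) = (\<Sum>h\<in>{-int N..-1}. F h) + (F 0 + (\<Sum>h\<in>{1..int N}. F h))"
    by (simp add: sum.union_disjoint)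
  have "(\<Sum>a<Suc N. \<Sum>b<Suc N. F (int a - int b)) =
      (\<Sum>a<N. \<Sum>b<N. F (int a - int b)) + (\<Sum>a<N. F (int a - int N)) + ((\<Sum>b<N. F (int N - int b)) + F 0)"
    by (simp add: sum.distrib algebra_simps)
  also have "\<dots> = (\<Sum>h\<in>{-int N..int N}. of_int (int N - \<bar>h\<bar>) * F h) + (\<Sum>h\<in>{-int N..int N}. F h)"
    using Suc.IH upper lower all by (simp add: algebra_simps)
  also have "\<dots> = (\<Sum>h\<in>{-int N..int N}. of_int (int (Suc N) - \<bar>h\<bar>) * F h)"
    by (simp add: sum.distrib[symmetric] algebra_simps)
  also have "\<dots> = (\<Sum>h\<in>{-int (Suc N)..int (Suc N)}. of_int (int (Suc N) - \<bar>h\<bar>) * F h)"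
  proof (rule sum.mono_neutral_left)
    show "\<forall>h\<in>{-int (Suc N)..int (Suc N)} - {-int N..int N}. of_int (int (Suc N) - \<bar>h\<bar>) * F h = 0"
    proof
      fix h
      assume "h \<in> {-int (Suc N)..int (Suc N)} - {-int N..int N}"
      then have "int (Suc N) - \<bar>h\<bar> = 0" by auto
      then show "of_int (int (Suc N) - \<bar>h\<bar>) * F h = 0" by simp
    qed
  qed auto
  finally show ?case .
qed

section \<open>Riesz-Fischer for even square-summable coefficients\<close>

lemma suminf_dominated_tendsto_0:
  fixes d :: "nat \<Rightarrow> real" and g :: "nat \<Rightarrow> nat \<Rightarrow> real"
  assumes d: "summable d" and g: "\<And>N n. 0 \<le> g N n" "\<And>N n. g N n \<le> d n"
    and lim: "\<And>n. (\<lambda>N. g N n) \<longlonglongrightarrow> 0"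
  shows "(\<lambda>N. \<Sum>n. g N n) \<longlonglongrightarrow> 0" and "\<And>N. summable (g N)"
proof -
  have "0 \<le> d n" for n using g(1)[of 0 n] g(2)[of 0 n] by linarith
  then have intd: "integrable (count_space UNIV) d"
    using d by (simp add: integrable_count_space_nat_iff)
  have "(\<lambda>N. integral\<^sup>L (count_space UNIV) (g N)) \<longlonglongrightarrow> integral\<^sup>L (count_space UNIV) (\<lambda>n. 0::real)"
    using integral_dominated_convergence[where w=d and s=g and f="\<lambda>n. 0" and M="count_space UNIV"]
      intd lim g by auto
  moreover have intg: "integrable (count_space UNIV) (g N)" for N
    by (rule integrable_dominated_convergence2[where w=d and f="\<lambda>n. 0"]) (use intd lim g in auto)
  ultimately show "(\<lambda>N. \<Sum>n. g N n) \<longlonglongrightarrow> 0"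
    by (simp add: integral_count_space_nat)
  show "summable (g N)" for N
    using intg[of N] g by (simp add: integrable_count_space_nat_iff)
qed

lemma summable_tail_bound:
  fixes d :: "nat \<Rightarrow> real"
  assumes "summable d" and d_nonneg: "\<And>n. 0 \<le> d n"
  obtains t where "t \<longlonglongrightarrow> 0" "\<And>N M. (\<Sum>n\<in>{N<..M}. d n) \<le> t N"
proof -
  define g where "g N = (\<lambda>n. if n > N then d n else 0)" for N
  have "(\<lambda>N. g N n) \<longlonglongrightarrow> 0" for n
    by (rule tendsto_eventually) (auto simp: g_def eventually_sequentially intro!: exI[of _ n])
  moreover have "0 \<le> g N n" "g N n \<le> d n" for N n
    using d_nonneg[of n] by (auto simp: g_def)
  ultimately have lim: "(\<lambda>N. \<Sum>n. g N n) \<longlonglongrightarrow> 0" and summable: "\<And>N. summable (g N)"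
    using suminf_dominated_tendsto_0[OF assms(1)] by blast+
  have "(\<Sum>n\<in>{N<..M}. d n) \<le> (\<Sum>n. g N n)" for N M
  proof -
    have "(\<Sum>n\<in>{N<..M}. d n) = (\<Sum>n<Suc M. g N n)"
      unfolding g_def by (rule sum.mono_neutral_cong_left) auto
    also have "\<dots> \<le> (\<Sum>n. g N n)"
      by (rule sum_le_suminf) (use summable d_nonneg in \<open>auto simp: g_def\<close>)
    finally show ?thesis .
  qed
  then show ?thesis using that[of "\<lambda>N. \<Sum>n. g N n"] lim by blast
qed

lemma nn_integral_abs_le_of_L2:
  fixes g :: "real \<Rightarrow> real"
  assumes [measurable]: "g \<in> borel_measurable borel" and \<delta>: "\<delta> > 0"
    and L2: "(\<integral>\<^sup>+x\<in>{-pi..pi}. ennreal ((g x)\<^sup>2) \<partial>lborel) \<le> ennreal \<delta>"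
  shows "(\<integral>\<^sup>+x\<in>{-pi..pi}. ennreal \<bar>g x\<bar> \<partial>lborel) \<le> ennreal ((pi + 1) * sqrt \<delta>)"
proof -
  define e where "e = sqrt \<delta>"
  have e: "e > 0" using \<delta> by (simp add: e_def)
  \<comment> \<open>AM-GM, optimised at \<open>\<bar>t\<bar> = e\<close>\<close>
  have am_gm: "\<bar>t\<bar> \<le> e / 2 + t\<^sup>2 / (2 * e)" for t
  proof -
    have "0 \<le> (\<bar>t\<bar> - e)\<^sup>2" by simp
    then have "2 * e * \<bar>t\<bar> \<le> e\<^sup>2 + t\<^sup>2" by (simp add: power2_eq_square algebra_simps)
    then show ?thesis using e by (simp add: field_simps power2_eq_square)
  qed
  have "(\<integral>\<^sup>+x\<in>{-pi..pi}. ennreal \<bar>g x\<bar> \<partial>lborel) \<le>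
      (\<integral>\<^sup>+x. (ennreal (e/2) * indicator {-pi..pi} x +
        ennreal (1/(2*e)) * (ennreal ((g x)\<^sup>2) * indicator {-pi..pi} x)) \<partial>lborel)"
  proof (intro nn_integral_mono)
    fix x
    have "ennreal \<bar>g x\<bar> \<le> ennreal (e/2) + ennreal (1/(2*e)) * ennreal ((g x)\<^sup>2)"
      using am_gm[of "g x"] e
      by (simp add: ennreal_plus[symmetric] ennreal_mult[symmetric] del: ennreal_plus)
    then show "ennreal \<bar>g x\<bar> * indicator {-pi..pi} x \<le> ennreal (e/2) * indicator {-pi..pi} x +
        ennreal (1/(2*e)) * (ennreal ((g x)\<^sup>2) * indicator {-pi..pi} x)"
      by (auto split: split_indicator)
  qed
  also have "\<dots> = ennreal (e/2) * emeasure lborel {-pi..pi} +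
      ennreal (1/(2*e)) * (\<integral>\<^sup>+x\<in>{-pi..pi}. ennreal ((g x)\<^sup>2) \<partial>lborel)"
    by (subst nn_integral_add) (auto simp: nn_integral_cmult)
  also have "\<dots> \<le> ennreal (e/2) * ennreal (2*pi) + ennreal (1/(2*e)) * ennreal \<delta>"
    using L2 by (intro add_mono mult_left_mono) auto
  also have "\<dots> = ennreal ((pi + 1/2) * sqrt \<delta>)"
    using e \<delta> by (simp add: e_def ennreal_mult[symmetric] ennreal_plus[symmetric] field_simps
        power2_eq_square[symmetric] del: ennreal_plus)
  also have "\<dots> \<le> ennreal ((pi + 1) * sqrt \<delta>)"
    using \<delta> by (intro ennreal_leI mult_right_mono) auto
  finally show ?thesis .
qed

lemma nn_integral_norm_le_of_L2:
  fixes g :: "real \<Rightarrow> complex"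
  assumes "g \<in> borel_measurable borel" and "\<delta> > 0"
    and "(\<integral>\<^sup>+x\<in>{-pi..pi}. ennreal ((cmod (g x))\<^sup>2) \<partial>lborel) \<le> ennreal \<delta>"
  shows "(\<integral>\<^sup>+x\<in>{-pi..pi}. ennreal (cmod (g x)) \<partial>lborel) \<le> ennreal ((pi + 1) * sqrt \<delta>)"
  using nn_integral_abs_le_of_L2[of "\<lambda>x. cmod (g x)" \<delta>] assms by simp

lemma nn_integral_norm_tendsto_0_of_L2:
  fixes g :: "nat \<Rightarrow> real \<Rightarrow> complex"
  assumes [measurable]: "\<And>N. g N \<in> borel_measurable borel"
    and L2: "(\<lambda>N. \<integral>\<^sup>+x\<in>{-pi..pi}. ennreal ((cmod (g N x))\<^sup>2) \<partial>lborel) \<longlonglongrightarrow> 0"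
  shows "(\<lambda>N. \<integral>\<^sup>+x\<in>{-pi..pi}. ennreal (cmod (g N x)) \<partial>lborel) \<longlonglongrightarrow> 0"
proof (rule tendsto_sandwich[OF _ _ tendsto_const])
  define L where "L N = (\<integral>\<^sup>+x\<in>{-pi..pi}. ennreal ((cmod (g N x))\<^sup>2) \<partial>lborel)" for N
  \<comment> \<open>the summand \<open>1/(N+1)\<close> only keeps \<open>\<delta> N\<close> positive\<close>
  define \<delta> where "\<delta> N = enn2real (L N) + 1 / (real N + 1)" for N
  have "(\<lambda>N. enn2real (L N)) \<longlonglongrightarrow> enn2real 0"
    using L2 unfolding L_def by (intro tendsto_enn2real) auto
  moreover have "(\<lambda>N. 1 / (real N + 1)) \<longlonglongrightarrow> 0"
    using LIMSEQ_inverse_real_of_nat by (simp add: divide_inverse add.commute)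
  ultimately have "\<delta> \<longlonglongrightarrow> 0"
    unfolding \<delta>_def using tendsto_add by fastforce
  then have "(\<lambda>N. ennreal ((pi + 1) * sqrt (\<delta> N))) \<longlonglongrightarrow> ennreal ((pi + 1) * sqrt 0)"
    by (intro tendsto_ennrealI tendsto_intros)
  then show "(\<lambda>N. ennreal ((pi + 1) * sqrt (\<delta> N))) \<longlonglongrightarrow> 0" by simp
  have "\<forall>\<^sub>F N in sequentially. L N < \<infinity>"
    using L2 unfolding L_def by (intro order_tendstoD) auto
  then show "\<forall>\<^sub>F N in sequentially.
      (\<integral>\<^sup>+x\<in>{-pi..pi}. ennreal (cmod (g N x)) \<partial>lborel) \<le> ennreal ((pi + 1) * sqrt (\<delta> N))"
  proof eventually_elim
    case (elim N)
    have "\<delta> N > 0" unfolding \<delta>_def by (intro add_nonneg_pos) auto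
    moreover have "L N \<le> ennreal (\<delta> N)"
      using elim unfolding \<delta>_def by (cases "L N") (auto intro!: ennreal_leI)
    ultimately show ?case
      unfolding L_def by (intro nn_integral_norm_le_of_L2) auto
  qed
qed simp

lemma sum_trunc_coeffs_tail:
  fixes a :: "int \<Rightarrow> real"
  assumes even: "\<And>h. a (-h) = a h" and "N \<le> K"
  shows "(\<Sum>h\<in>{-int K..int K}. (trunc_coeffs N a h - a h)\<^sup>2) = 2 * (\<Sum>n\<in>{N<..K}. (a (int n))\<^sup>2)"
proof -
  have "(\<Sum>n\<in>{1..K}. (trunc_coeffs N a (int n) - a (int n))\<^sup>2) = (\<Sum>n\<in>{N<..K}. (a (int n))\<^sup>2)"
    by (rule sum.mono_neutral_cong_right) (auto simp: trunc_coeffs_def)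
  then show ?thesis using sum_trunc_coeffs_dist_even[where a=a and b=a and K=K and N=N, OF even even] by simp
qed

lemma nn_integral_trig_poly_partial_sums_dist:
  fixes a :: "int \<Rightarrow> real"
  assumes "\<And>h. a (-h) = a h" and "N \<le> M"
  shows "(\<integral>\<^sup>+x\<in>{-pi..pi}. ennreal ((cmod (trig_poly a N x - trig_poly a M x))\<^sup>2) \<partial>lborel)
    = ennreal (4 * pi * (\<Sum>n\<in>{N<..M}. (a (int n))\<^sup>2))"
  using nn_integral_trig_poly_dist[of "trunc_coeffs N a" M a] sum_trunc_coeffs_tail[where a=a, OF assms]
  by (simp add: trig_poly_trunc_coeffs[OF assms(2)] mult.assoc)

lemma norm_trig_poly_diff_even:
  assumes "\<And>h. a (-h) = a h"
  shows "cmod (trig_poly a i x - trig_poly a j x) = \<bar>Re (trig_poly a i x) - Re (trig_poly a j x)\<bar>"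
proof -
  have "Im (trig_poly a K y) = 0" for K y
    by (subst trig_poly_real[where a=a, OF assms]) simp
  then show ?thesis by (simp add: cmod_eq_Re)
qed

lemma trig_poly_partial_sums_L1_cauchy:
  fixes a :: "int \<Rightarrow> real"
  assumes even: "\<And>h. a (-h) = a h" and sq: "summable (\<lambda>n. (a (int n))\<^sup>2)" and e: "e > 0"
  shows "\<exists>N. \<forall>i\<ge>N. \<forall>j\<ge>N.
    (\<integral>\<^sup>+x\<in>{-pi..pi}. ennreal (cmod (trig_poly a i x - trig_poly a j x)) \<partial>lborel) \<le> ennreal (e / 2)"
proof -
  obtain t where t: "t \<longlonglongrightarrow> 0" "\<And>N M. (\<Sum>n\<in>{N<..M}. (a (int n))\<^sup>2) \<le> t N"
    by (rule summable_tail_bound[of "\<lambda>n. (a (int n))\<^sup>2", OF sq zero_le_power2]) simp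
  have pi1: "pi + 1 > 0" using pi_gt_zero by linarith
  define \<delta> where "\<delta> = (e / (2 * (pi + 1)))\<^sup>2"
  have \<delta>: "\<delta> > 0" using e pi1 unfolding \<delta>_def by simp
  have "sqrt \<delta> = e / (2 * (pi + 1))" unfolding \<delta>_def using e pi1 by simp
  then have sqrt_\<delta>: "(pi + 1) * sqrt \<delta> = e / 2" using pi1 by (simp add: field_simps)
  have "\<forall>\<^sub>F N in sequentially. t N < \<delta> / (4 * pi)"
    using t(1) \<delta> by (intro order_tendstoD) auto
  then obtain N where N: "t N < \<delta> / (4 * pi)" by (auto simp: eventually_sequentially)
  have ordered: "(\<integral>\<^sup>+x\<in>{-pi..pi}. ennreal (cmod (trig_poly a i x - trig_poly a j x)) \<partial>lborel)
      \<le> ennreal (e / 2)" if "N \<le> i" "i \<le> j" for i j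
  proof -
    have "(\<Sum>n\<in>{i<..j}. (a (int n))\<^sup>2) \<le> (\<Sum>n\<in>{N<..j}. (a (int n))\<^sup>2)"
      using that by (intro sum_mono2) auto
    also have "\<dots> \<le> t N" by (rule t(2))
    finally have "4 * pi * (\<Sum>n\<in>{i<..j}. (a (int n))\<^sup>2) \<le> 4 * pi * t N" by simp
    also have "\<dots> \<le> \<delta>" using N by (simp add: field_simps)
    finally have "(\<integral>\<^sup>+x\<in>{-pi..pi}. ennreal ((cmod (trig_poly a i x - trig_poly a j x))\<^sup>2) \<partial>lborel)
        \<le> ennreal \<delta>"
      unfolding nn_integral_trig_poly_partial_sums_dist[where a=a, OF even \<open>i \<le> j\<close>] by (rule ennreal_leI)
    from nn_integral_norm_le_of_L2[OF _ \<delta> this] show ?thesis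
      unfolding sqrt_\<delta> by simp
  qed
  have "(\<integral>\<^sup>+x\<in>{-pi..pi}. ennreal (cmod (trig_poly a i x - trig_poly a j x)) \<partial>lborel)
      \<le> ennreal (e / 2)" if "N \<le> i" "N \<le> j" for i j
  proof (cases "i \<le> j")
    case False
    then have "(\<integral>\<^sup>+x\<in>{-pi..pi}. ennreal (cmod (trig_poly a j x - trig_poly a i x)) \<partial>lborel)
        \<le> ennreal (e / 2)" using ordered that by simp
    then show ?thesis by (subst norm_minus_commute)
  qed (use ordered that in blast)
  then show ?thesis by blast
qed

lemma Re_trig_poly_partial_sums_L1_cauchy:
  fixes a :: "int \<Rightarrow> real"
  assumes even: "\<And>h. a (-h) = a h" and sq: "summable (\<lambda>n. (a (int n))\<^sup>2)" and e: "e > 0"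
  shows "\<exists>N. \<forall>i\<ge>N. \<forall>j\<ge>N. LINT x|lborel.
    norm (indicator {-pi..pi} x * Re (trig_poly a i x) - indicator {-pi..pi} x * Re (trig_poly a j x)) < e"
proof -
  obtain N where N: "\<And>i j. N \<le> i \<Longrightarrow> N \<le> j \<Longrightarrow>
      (\<integral>\<^sup>+x\<in>{-pi..pi}. ennreal (cmod (trig_poly a i x - trig_poly a j x)) \<partial>lborel) \<le> ennreal (e / 2)"
    using trig_poly_partial_sums_L1_cauchy[OF even sq e] by blast
  have "LINT x|lborel. norm (indicator {-pi..pi} x * Re (trig_poly a i x) -
      indicator {-pi..pi} x * Re (trig_poly a j x)) \<le> e / 2" if "N \<le> i" "N \<le> j" for i j
  proof -
    have L1: "(\<integral>\<^sup>+x. ennreal (norm (indicator {-pi..pi} x * Re (trig_poly a i x) -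
        indicator {-pi..pi} x * Re (trig_poly a j x))) \<partial>lborel) =
        (\<integral>\<^sup>+x\<in>{-pi..pi}. ennreal (cmod (trig_poly a i x - trig_poly a j x)) \<partial>lborel)"
      unfolding norm_trig_poly_diff_even[where a=a, OF even]
      by (intro nn_integral_cong) (auto split: split_indicator)
    have "LINT x|lborel. norm (indicator {-pi..pi} x * Re (trig_poly a i x) -
        indicator {-pi..pi} x * Re (trig_poly a j x)) =
        enn2real (\<integral>\<^sup>+x. ennreal (norm (indicator {-pi..pi} x * Re (trig_poly a i x) -
          indicator {-pi..pi} x * Re (trig_poly a j x))) \<partial>lborel)"
      by (rule integral_eq_nn_integral) auto
    also have "\<dots> \<le> e / 2"
      unfolding L1 using N[OF that] e by (intro enn2real_leI) auto
    finally show ?thesis .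
  qed
  moreover have "e / 2 < e" using e by simp
  ultimately show ?thesis by (meson order.strict_trans1)
qed

lemma trig_poly_partial_sums_AE_subseq_tendsto:
  fixes a :: "int \<Rightarrow> real"
  assumes even: "\<And>h. a (-h) = a h" and sq: "summable (\<lambda>n. (a (int n))\<^sup>2)"
  obtains r :: "nat \<Rightarrow> nat" and f :: "real \<Rightarrow> real"
  where "strict_mono r" and "f \<in> borel_measurable borel"
    and "AE x in lborel. x \<in> {-pi..pi} \<longrightarrow> (\<lambda>k. trig_poly a (r k) x) \<longlonglongrightarrow> complex_of_real (f x)"
proof -
  define s where "s n x = indicator {-pi..pi} x * Re (trig_poly a n x)" for n x
  have "integrable lborel (s n)" for n
    using borel_integrable_atLeastAtMost'[of "-pi" pi "\<lambda>x. Re (trig_poly a n x)"]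
    unfolding set_integrable_def s_def by (auto intro!: continuous_intros continuous_on_trig_poly)
  moreover have "\<exists>N. \<forall>i\<ge>N. \<forall>j\<ge>N. LINT x|lborel. norm (s i x - s j x) < e" if "e > 0" for e
    using Re_trig_poly_partial_sums_L1_cauchy[OF even sq that] unfolding s_def .
  ultimately obtain r where r: "strict_mono r" and cauchy: "AE x in lborel. Cauchy (\<lambda>i. s (r i) x)"
    using cauchy_L1_AE_cauchy_subseq by blast
  define f where "f x = lim (\<lambda>i. s (r i) x)" for x
  have "AE x in lborel. x \<in> {-pi..pi} \<longrightarrow> (\<lambda>k. trig_poly a (r k) x) \<longlonglongrightarrow> complex_of_real (f x)"
    using cauchy
  proof eventually_elim
    case (elim x)
    then have s_lim: "(\<lambda>k. complex_of_real (s (r k) x)) \<longlonglongrightarrow> complex_of_real (f x)"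
      by (intro tendsto_of_real) (simp add: f_def Cauchy_convergent_iff convergent_LIMSEQ_iff)
    show ?case
    proof
      assume "x \<in> {-pi..pi}"
      then have "complex_of_real (s k x) = trig_poly a k x" for k
        by (simp add: s_def flip: trig_poly_real[where a=a, OF even])
      then show "(\<lambda>k. trig_poly a (r k) x) \<longlonglongrightarrow> complex_of_real (f x)"
        using s_lim by simp
    qed
  qed
  moreover have "f \<in> borel_measurable borel" unfolding f_def s_def by measurable
  ultimately show ?thesis using that r by blast
qed

lemma nn_integral_sq_dist_le_of_AE_tendsto:
  fixes u f :: "real \<Rightarrow> complex" and g :: "nat \<Rightarrow> real \<Rightarrow> complex" and B :: ennreal
  assumes [measurable]: "\<And>k. g k \<in> borel_measurable borel" "u \<in> borel_measurable borel"
    and lim: "AE x in lborel. x \<in> A \<longrightarrow> (\<lambda>k. g k x) \<longlonglongrightarrow> f x"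
    and A[measurable]: "A \<in> sets borel"
    and bound: "\<forall>\<^sub>F k in sequentially. (\<integral>\<^sup>+x\<in>A. ennreal ((cmod (u x - g k x))\<^sup>2) \<partial>lborel) \<le> B"
  shows "(\<integral>\<^sup>+x\<in>A. ennreal ((cmod (u x - f x))\<^sup>2) \<partial>lborel) \<le> B"
proof -
  define v where "v k = (\<lambda>x. ennreal ((cmod (u x - g k x))\<^sup>2) * indicator A x)" for k
  have "(\<integral>\<^sup>+x\<in>A. ennreal ((cmod (u x - f x))\<^sup>2) \<partial>lborel) = (\<integral>\<^sup>+x. liminf (\<lambda>k. v k x) \<partial>lborel)"
  proof (rule nn_integral_cong_AE)
    show "AE x in lborel. ennreal ((cmod (u x - f x))\<^sup>2) * indicator A x = liminf (\<lambda>k. v k x)"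
      using lim
    proof eventually_elim
      case (elim x)
      show ?case
      proof (cases "x \<in> A")
        case True
        then have "(\<lambda>k. ennreal ((cmod (u x - g k x))\<^sup>2)) \<longlonglongrightarrow> ennreal ((cmod (u x - f x))\<^sup>2)"
          using elim by (intro tendsto_intros) auto
        then have "liminf (\<lambda>k. v k x) = ennreal ((cmod (u x - f x))\<^sup>2)"
          using True unfolding v_def by (intro lim_imp_Liminf) auto
        then show ?thesis using True by simp
      qed (simp add: v_def Liminf_const)
    qed
  qed
  also have "\<dots> \<le> liminf (\<lambda>k. integral\<^sup>N lborel (v k))"
    by (rule nn_integral_liminf) (simp add: v_def)
  also have "\<dots> \<le> B"
    by (rule Liminf_le) (use bound in \<open>simp_all add: v_def\<close>)
  finally show ?thesis .
qed

text \<open>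
  Instead of L^2 spaces we use a Parseval-type bound: \<open>fourier_L2_limit a f\<close> says that the
  L^2 distance from f to any trigonometric polynomial is at most what Parseval's identity predicts
  for a function with Fourier coefficients a.\<close>

definition fourier_L2_limit :: "(int \<Rightarrow> real) \<Rightarrow> (real \<Rightarrow> real) \<Rightarrow> bool" where
  "fourier_L2_limit a f \<longleftrightarrow> f \<in> borel_measurable borel \<and>
     (\<forall>b N B. (\<forall>K\<ge>N. 2 * pi * (\<Sum>h\<in>{-int K..int K}. (trunc_coeffs N b h - a h)\<^sup>2) \<le> B) \<longrightarrow>
       (\<integral>\<^sup>+x\<in>{-pi..pi}. ennreal ((cmod (trig_poly b N x - complex_of_real (f x)))\<^sup>2) \<partial>lborel)
         \<le> ennreal B)"

lemma riesz_fischer: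
  fixes a :: "int \<Rightarrow> real"
  assumes even: "\<And>h. a (-h) = a h" and sq: "summable (\<lambda>n. (a (int n))\<^sup>2)"
  obtains f where "fourier_L2_limit a f"
proof -
  obtain r f where r: "strict_mono r" and f: "f \<in> borel_measurable borel" and lim:
    "AE x in lborel. x \<in> {-pi..pi} \<longrightarrow> (\<lambda>k. trig_poly a (r k) x) \<longlonglongrightarrow> complex_of_real (f x)"
    using trig_poly_partial_sums_AE_subseq_tendsto[OF even sq] by blast
  have "fourier_L2_limit a f"
    unfolding fourier_L2_limit_def
  proof (intro conjI allI impI f)
    fix b N B
    assume B: "\<forall>K\<ge>N. 2 * pi * (\<Sum>h\<in>{-int K..int K}. (trunc_coeffs N b h - a h)\<^sup>2) \<le> B"
    have "\<forall>\<^sub>F k in sequentially. N \<le> r k"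
      using r by (metis eventually_sequentiallyI order.trans seq_suble)
    then have "\<forall>\<^sub>F k in sequentially. (\<integral>\<^sup>+x\<in>{-pi..pi}.
        ennreal ((cmod (trig_poly b N x - trig_poly a (r k) x))\<^sup>2) \<partial>lborel) \<le> ennreal B"
      by eventually_elim
        (use B in \<open>simp add: trig_poly_trunc_coeffs[of N] nn_integral_trig_poly_dist ennreal_leI\<close>)
    then show "(\<integral>\<^sup>+x\<in>{-pi..pi}. ennreal ((cmod (trig_poly b N x - complex_of_real (f x)))\<^sup>2)
        \<partial>lborel) \<le> ennreal B"
      using f by (intro nn_integral_sq_dist_le_of_AE_tendsto[OF _ _ lim]) auto
  qed
  then show ?thesis by (rule that)
qed
lemma fourier_L2_limit_tendsto:
  fixes a :: "int \<Rightarrow> real"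
  assumes lim: "fourier_L2_limit a f"
    and even: "\<And>h. a (-h) = a h" and sq: "summable (\<lambda>n. (a (int n))\<^sup>2)"
  shows "(\<lambda>N. \<integral>\<^sup>+x\<in>{-pi..pi}. ennreal ((cmod (trig_poly a N x - complex_of_real (f x)))\<^sup>2) \<partial>lborel)
    \<longlonglongrightarrow> 0"
proof -
  obtain t where t: "t \<longlonglongrightarrow> 0" "\<And>N M. (\<Sum>n\<in>{N<..M}. (a (int n))\<^sup>2) \<le> t N"
    by (rule summable_tail_bound[of "\<lambda>n. (a (int n))\<^sup>2", OF sq zero_le_power2]) simp
  have bound: "(\<integral>\<^sup>+x\<in>{-pi..pi}. ennreal ((cmod (trig_poly a N x - complex_of_real (f x)))\<^sup>2) \<partial>lborel)
      \<le> ennreal (4 * pi * t N)" for N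
  proof -
    have "2 * pi * (\<Sum>h\<in>{-int K..int K}. (trunc_coeffs N a h - a h)\<^sup>2) \<le> 4 * pi * t N"
      if "N \<le> K" for K
      using sum_trunc_coeffs_tail[where a=a, OF even that] t(2)[of N K] by simp
    then show ?thesis using lim unfolding fourier_L2_limit_def by blast
  qed
  have "(\<lambda>N. ennreal (4 * pi * t N)) \<longlonglongrightarrow> 0"
    using tendsto_ennrealI[OF tendsto_mult[OF tendsto_const t(1)], of "4 * pi"] by simp
  from tendsto_sandwich[OF _ _ tendsto_const this] show ?thesis
    using bound by simp
qed

lemma fourier_L2_limit_L1_tendsto:
  fixes a :: "int \<Rightarrow> real"
  assumes lim: "fourier_L2_limit a f"
    and "\<And>h. a (-h) = a h" and "summable (\<lambda>n. (a (int n))\<^sup>2)"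
  shows "(\<lambda>N. \<integral>\<^sup>+x\<in>{-pi..pi}. ennreal (cmod (trig_poly a N x - complex_of_real (f x))) \<partial>lborel)
    \<longlonglongrightarrow> 0"
proof (rule nn_integral_norm_tendsto_0_of_L2[OF _ fourier_L2_limit_tendsto[OF assms]])
  have [measurable]: "f \<in> borel_measurable borel" using lim by (simp add: fourier_L2_limit_def)
  show "(\<lambda>x. trig_poly a N x - complex_of_real (f x)) \<in> borel_measurable borel" for N
    by measurable
qed

lemma set_integrable_bounded_mult_of_real:
  fixes f :: "real \<Rightarrow> real" and g :: "real \<Rightarrow> complex"
  assumes f: "set_integrable lborel A f" and [measurable]: "g \<in> borel_measurable borel"
    and g: "\<And>x. cmod (g x) \<le> 1"
  shows "set_integrable lborel A (\<lambda>x. g x * complex_of_real (f x))"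
proof (rule set_integrable_bound[OF f])
  have [measurable]: "(\<lambda>x. indicator A x *\<^sub>R f x) \<in> borel_measurable lborel"
    using f unfolding set_integrable_def by auto
  have "(\<lambda>x. indicator A x *\<^sub>R (g x * complex_of_real (f x))) =
      (\<lambda>x. g x * complex_of_real (indicator A x *\<^sub>R f x))"
    by (auto simp: fun_eq_iff split: split_indicator)
  then show "set_borel_measurable lborel A (\<lambda>x. g x * complex_of_real (f x))"
    unfolding set_borel_measurable_def by (simp only:) measurable
  show "AE x in lborel. x \<in> A \<longrightarrow> norm (g x * complex_of_real (f x)) \<le> norm (f x)"
    using g by (simp add: norm_mult mult_left_le_one_le)
qed

lemma fourier_L2_limit_set_integrable:
  fixes a :: "int \<Rightarrow> real"
  assumes lim: "fourier_L2_limit a f"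
    and "\<And>h. a (-h) = a h" and "summable (\<lambda>n. (a (int n))\<^sup>2)"
  shows "set_integrable lborel {-pi..pi} f"
proof -
  have [measurable]: "f \<in> borel_measurable borel" using lim by (simp add: fourier_L2_limit_def)
  have "\<forall>\<^sub>F N in sequentially.
      (\<integral>\<^sup>+x\<in>{-pi..pi}. ennreal (cmod (trig_poly a N x - complex_of_real (f x))) \<partial>lborel) < \<infinity>"
    using fourier_L2_limit_L1_tendsto[OF assms] by (intro order_tendstoD) auto
  then obtain N where N:
    "(\<integral>\<^sup>+x\<in>{-pi..pi}. ennreal (cmod (trig_poly a N x - complex_of_real (f x))) \<partial>lborel) < \<infinity>"
    by (auto simp: eventually_sequentially)
  have "set_integrable lborel {-pi..pi} (trig_poly a N)"
    by (intro borel_integrable_atLeastAtMost' continuous_on_trig_poly)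
  then have P: "(\<integral>\<^sup>+x\<in>{-pi..pi}. ennreal (cmod (trig_poly a N x)) \<partial>lborel) < \<infinity>"
    unfolding set_integrable_def integrable_iff_bounded
    by (simp add: nn_integral_set_ennreal[symmetric] norm_scaleR abs_indicator mult.commute)
  show ?thesis
    unfolding set_integrable_def
  proof (rule integrableI_bounded)
    show "(\<lambda>x. indicator {-pi..pi} x *\<^sub>R f x) \<in> borel_measurable lborel" by measurable
    have "(\<integral>\<^sup>+x. ennreal (norm (indicator {-pi..pi} x *\<^sub>R f x)) \<partial>lborel) \<le>
        (\<integral>\<^sup>+x\<in>{-pi..pi}. ennreal (cmod (trig_poly a N x - complex_of_real (f x))) +
          ennreal (cmod (trig_poly a N x)) \<partial>lborel)"
    proof (intro nn_integral_mono)
      fix x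
      have "\<bar>f x\<bar> \<le> cmod (trig_poly a N x - complex_of_real (f x)) + cmod (trig_poly a N x)"
        using norm_triangle_ineq4[of "trig_poly a N x" "trig_poly a N x - complex_of_real (f x)"]
        by simp
      then show "ennreal (norm (indicator {-pi..pi} x *\<^sub>R f x)) \<le>
          (ennreal (cmod (trig_poly a N x - complex_of_real (f x))) +
            ennreal (cmod (trig_poly a N x))) * indicator {-pi..pi} x"
        by (auto simp: ennreal_plus[symmetric] simp del: ennreal_plus split: split_indicator)
    qed
    also have "\<dots> < \<infinity>"
      using N P by (simp add: nn_integral_add distrib_right)
    finally show "(\<integral>\<^sup>+x. ennreal (norm (indicator {-pi..pi} x *\<^sub>R f x)) \<partial>lborel) < \<infinity>" .
  qed
qed

lemma norm_fourier_coeff_sub_le_L1_dist: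
  fixes a :: "int \<Rightarrow> real" and f :: "real \<Rightarrow> real"
  assumes f: "set_integrable lborel {-pi..pi} f" and [measurable]: "f \<in> borel_measurable borel"
    and N: "\<bar>h\<bar> \<le> int N"
  shows "cmod ((\<integral>x\<in>{-pi..pi}. cis (real_of_int h * x) * complex_of_real (f x) \<partial>lborel) -
      complex_of_real (2 * pi * a (-h)))
    \<le> enn2real (\<integral>\<^sup>+x\<in>{-pi..pi}. ennreal (cmod (trig_poly a N x - complex_of_real (f x))) \<partial>lborel)"
proof -
  have cis_f: "set_integrable lborel {-pi..pi} (\<lambda>x. cis (real_of_int h * x) * complex_of_real (f x))"
    by (intro set_integrable_bounded_mult_of_real f) auto
  have cis_P: "set_integrable lborel {-pi..pi} (\<lambda>x. cis (real_of_int h * x) * trig_poly a N x)"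
    by (intro borel_integrable_atLeastAtMost' continuous_intros continuous_on_trig_poly)
  have rotate: "cmod (cis t * u - cis t * v) = cmod (v - u)" for t u v
  proof -
    have "cis t * u - cis t * v = cis t * (u - v)" by (simp add: algebra_simps)
    then show ?thesis by (simp add: norm_mult norm_minus_commute)
  qed
  have "(\<integral>x\<in>{-pi..pi}. cis (real_of_int h * x) * complex_of_real (f x) \<partial>lborel) -
      complex_of_real (2 * pi * a (-h)) = (LINT x:{-pi..pi}|lborel.
        cis (real_of_int h * x) * complex_of_real (f x) - cis (real_of_int h * x) * trig_poly a N x)"
    using set_integral_cis_trig_poly[OF N, of a] set_integral_diff(2)[OF cis_f cis_P] by simp
  also have "norm \<dots> \<le> (LINT x:{-pi..pi}|lborel.
      norm (cis (real_of_int h * x) * complex_of_real (f x) - cis (real_of_int h * x) * trig_poly a N x))"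
    by (intro set_integral_norm_bound set_integral_diff(1) cis_f cis_P)
  also have "\<dots> = (LINT x:{-pi..pi}|lborel. cmod (trig_poly a N x - complex_of_real (f x)))"
    by (simp only: rotate)
  also have "\<dots> = enn2real (\<integral>\<^sup>+x\<in>{-pi..pi}. ennreal (cmod (trig_poly a N x - complex_of_real (f x)))
      \<partial>lborel)"
    unfolding set_lebesgue_integral_def nn_integral_set_ennreal
    by (subst integral_eq_nn_integral) (auto simp: mult.commute)
  finally show ?thesis .
qed

lemma fourier_L2_limit_coeff:
  fixes a :: "int \<Rightarrow> real"
  assumes lim: "fourier_L2_limit a f"
    and even: "\<And>h. a (-h) = a h" and sq: "summable (\<lambda>n. (a (int n))\<^sup>2)"
  shows "complex_of_real (2 * pi * a h) =
    (\<integral>x\<in>{-pi..pi}. cis (real_of_int h * x) * complex_of_real (f x) \<partial>lborel)"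
proof -
  have [measurable]: "f \<in> borel_measurable borel" using lim by (simp add: fourier_L2_limit_def)
  define L1 where "L1 N = (\<integral>\<^sup>+x\<in>{-pi..pi}. ennreal (cmod (trig_poly a N x - complex_of_real (f x))) \<partial>lborel)"
    for N
  define z where "z = (\<integral>x\<in>{-pi..pi}. cis (real_of_int h * x) * complex_of_real (f x) \<partial>lborel) -
    complex_of_real (2 * pi * a h)"
  have "norm z \<le> enn2real (L1 N)" if "\<bar>h\<bar> \<le> int N" for N
    using norm_fourier_coeff_sub_le_L1_dist[OF fourier_L2_limit_set_integrable[OF assms] _ that, of a]
    by (simp add: z_def L1_def even)
  then have "\<forall>\<^sub>F N in sequentially. norm z \<le> enn2real (L1 N)"
    by (metis eventually_sequentially nat_le_iff)
  moreover have "L1 \<longlonglongrightarrow> ennreal 0"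
    using fourier_L2_limit_L1_tendsto[OF lim even sq] by (simp add: L1_def[abs_def])
  then have "(\<lambda>N. enn2real (L1 N)) \<longlonglongrightarrow> 0"
    using tendsto_enn2real by fastforce
  ultimately have "norm z \<le> 0"
    using tendsto_le[OF trivial_limit_sequentially _ tendsto_const] by blast
  then show ?thesis unfolding z_def by simp
qed

section \<open>Positive definite sequences and Fejer means\<close>

text \<open>
  Positive definiteness is only tested against the vectors \<open>(e^{ikx})_{k<N}\<close>; this is exactly
  what makes the Fejer means nonnegative.\<close>

definition cis_positive_definite :: "(int \<Rightarrow> real) \<Rightarrow> bool" where
  "cis_positive_definite c \<longleftrightarrow> (\<forall>N x. 0 \<le> Re (\<Sum>i<N. \<Sum>j<N.
      complex_of_real (c (int i - int j)) * cis (real_of_int (int i - int j) * x)))"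

lemma cis_positive_definite_divide:
  assumes "cis_positive_definite c" and "r > 0"
  shows "cis_positive_definite (\<lambda>h. c h / r)"
proof -
  have "(\<Sum>i<N. \<Sum>j<N. complex_of_real (c (int i - int j) / r) * cis (real_of_int (int i - int j) * x))
      = (\<Sum>i<N. \<Sum>j<N. complex_of_real (c (int i - int j)) * cis (real_of_int (int i - int j) * x))
        / complex_of_real r" for N x
    by (simp add: sum_divide_distrib)
  then show ?thesis
    using assms by (simp add: cis_positive_definite_def Re_divide_of_real)
qed

definition fejer_coeffs :: "nat \<Rightarrow> (int \<Rightarrow> real) \<Rightarrow> int \<Rightarrow> real" where
  "fejer_coeffs N a h = a h * (1 - real_of_int \<bar>h\<bar> / real N)"

lemma trig_poly_fejer_coeffs:
  assumes "N \<ge> 1"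
  shows "trig_poly (fejer_coeffs N a) N x =
    (\<Sum>i<N. \<Sum>j<N. complex_of_real (a (int i - int j)) * cis (real_of_int (int i - int j) * x))
      / of_nat N"
proof -
  have "(\<Sum>i<N. \<Sum>j<N. complex_of_real (a (int i - int j)) * cis (real_of_int (int i - int j) * x))
      = (\<Sum>h\<in>{-int N..int N}. of_int (int N - \<bar>h\<bar>) * (complex_of_real (a h) * cis (real_of_int h * x)))"
    by (rule double_sum_of_diff)
  also have "\<dots> = of_nat N * trig_poly (fejer_coeffs N a) N x"
    unfolding trig_poly_def sum_distrib_left
  proof (intro sum.cong refl)
    fix h
    have "complex_of_real \<bar>real_of_int h\<bar> = complex_of_int \<bar>h\<bar>"
      by (metis of_int_abs of_real_of_int_eq)
    then have "of_int (int N - \<bar>h\<bar>) = complex_of_real (real N * (1 - real_of_int \<bar>h\<bar> / real N))"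
      using assms by (simp add: field_simps)
    then show "of_int (int N - \<bar>h\<bar>) * (complex_of_real (a h) * cis (real_of_int h * x)) =
        of_nat N * (complex_of_real (fejer_coeffs N a h) * cis (real_of_int h * x))"
      by (simp add: fejer_coeffs_def mult_ac)
  qed
  finally show ?thesis using assms by simp
qed

lemma Re_trig_poly_fejer_coeffs_nonneg:
  assumes "cis_positive_definite a" and "N \<ge> 1"
  shows "0 \<le> Re (trig_poly (fejer_coeffs N a) N x)"
  using assms unfolding trig_poly_fejer_coeffs[OF assms(2)] cis_positive_definite_def
  by (simp add: Re_divide_of_nat)

lemma sum_trunc_fejer_coeffs_dist:
  fixes a :: "int \<Rightarrow> real"
  assumes even: "\<And>h. a (-h) = a h" and N: "N \<ge> 1"
  shows "(\<Sum>h\<in>{-int K..int K}. (trunc_coeffs N (fejer_coeffs N a) h - a h)\<^sup>2) =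
    2 * (\<Sum>n\<in>{1..K}. (a (int n))\<^sup>2 * min 1 ((real n / real N)\<^sup>2))"
proof -
  have "fejer_coeffs N a (-h) = fejer_coeffs N a h" for h
    by (simp add: fejer_coeffs_def even)
  then have "(\<Sum>h\<in>{-int K..int K}. (trunc_coeffs N (fejer_coeffs N a) h - a h)\<^sup>2) =
      2 * (\<Sum>n\<in>{1..K}. (trunc_coeffs N (fejer_coeffs N a) (int n) - a (int n))\<^sup>2)"
    using sum_trunc_coeffs_dist_even[where a="fejer_coeffs N a" and b=a and K=K and N=N] even
    by (simp add: fejer_coeffs_def)
  also have "(\<Sum>n\<in>{1..K}. (trunc_coeffs N (fejer_coeffs N a) (int n) - a (int n))\<^sup>2) =
      (\<Sum>n\<in>{1..K}. (a (int n))\<^sup>2 * min 1 ((real n / real N)\<^sup>2))"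
  proof (intro sum.cong refl)
    fix n
    show "(trunc_coeffs N (fejer_coeffs N a) (int n) - a (int n))\<^sup>2 =
        (a (int n))\<^sup>2 * min 1 ((real n / real N)\<^sup>2)"
    proof (cases "n \<le> N")
      case True
      then have "(real n / real N)\<^sup>2 \<le> 1" using N by (simp add: power_le_one)
      then show ?thesis using True N
        by (simp add: trunc_coeffs_def fejer_coeffs_def power2_eq_square field_simps)
    next
      case False
      then have "(real n / real N)\<^sup>2 \<ge> 1" using N by (simp add: field_simps)
      then show ?thesis using False by (simp add: trunc_coeffs_def min_def)
    qed
  qed
  finally show ?thesis .
qed

lemma fourier_L2_limit_fejer_tendsto:
  fixes a :: "int \<Rightarrow> real"
  assumes lim: "fourier_L2_limit a f"
    and even: "\<And>h. a (-h) = a h" and sq: "summable (\<lambda>n. (a (int n))\<^sup>2)"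
  shows "(\<lambda>N. \<integral>\<^sup>+x\<in>{-pi..pi}.
    ennreal ((cmod (trig_poly (fejer_coeffs N a) N x - complex_of_real (f x)))\<^sup>2) \<partial>lborel) \<longlonglongrightarrow> 0"
proof -
  define g where "g N = (\<lambda>n. (a (int n))\<^sup>2 * min 1 ((real n / real N)\<^sup>2))" for N
  have "(\<lambda>N. g N n) \<longlonglongrightarrow> 0" for n
  proof -
    have "(\<lambda>N. real n / real N) \<longlonglongrightarrow> 0" by (rule lim_const_over_n)
    then have "(\<lambda>N. (a (int n))\<^sup>2 * min 1 ((real n / real N)\<^sup>2)) \<longlonglongrightarrow> (a (int n))\<^sup>2 * min 1 (0\<^sup>2)"
      by (intro tendsto_intros)
    then show ?thesis by (simp add: g_def)
  qed
  moreover have "0 \<le> g N n" "g N n \<le> (a (int n))\<^sup>2" for N n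
    by (simp_all add: g_def mult_left_le)
  ultimately have g_lim: "(\<lambda>N. \<Sum>n. g N n) \<longlonglongrightarrow> 0" and g_sum: "\<And>N. summable (g N)"
    using suminf_dominated_tendsto_0[OF sq] by blast+
  have bound: "(\<integral>\<^sup>+x\<in>{-pi..pi}.
      ennreal ((cmod (trig_poly (fejer_coeffs N a) N x - complex_of_real (f x)))\<^sup>2) \<partial>lborel)
      \<le> ennreal (4 * pi * (\<Sum>n. g N n))" if N: "N \<ge> 1" for N
  proof -
    have "2 * pi * (\<Sum>h\<in>{-int K..int K}. (trunc_coeffs N (fejer_coeffs N a) h - a h)\<^sup>2)
        \<le> 4 * pi * (\<Sum>n. g N n)" for K
    proof -
      have "(\<Sum>n\<in>{1..K}. g N n) \<le> (\<Sum>n. g N n)"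
        using g_sum by (intro sum_le_suminf) (auto simp: g_def)
      then show ?thesis
        by (simp add: sum_trunc_fejer_coeffs_dist[where a=a, OF even N] g_def)
    qed
    then show ?thesis using lim unfolding fourier_L2_limit_def by blast
  qed
  have lim_bound: "(\<lambda>N. ennreal (4 * pi * (\<Sum>n. g N n))) \<longlonglongrightarrow> 0"
    using tendsto_ennrealI[OF tendsto_mult[OF tendsto_const g_lim], of "4 * pi"] by simp
  have "\<forall>\<^sub>F N in sequentially. (\<integral>\<^sup>+x\<in>{-pi..pi}.
      ennreal ((cmod (trig_poly (fejer_coeffs N a) N x - complex_of_real (f x)))\<^sup>2) \<partial>lborel)
      \<le> ennreal (4 * pi * (\<Sum>n. g N n))"
    using bound by (auto simp: eventually_sequentially)
  from tendsto_sandwich[OF _ this tendsto_const lim_bound] show ?thesis by simp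
qed

lemma fourier_L2_limit_nonneg:
  fixes a :: "int \<Rightarrow> real"
  assumes lim: "fourier_L2_limit a f" and even: "\<And>h. a (-h) = a h"
    and "summable (\<lambda>n. (a (int n))\<^sup>2)" and pd: "cis_positive_definite a"
  shows "AE x in lborel. x \<in> {-pi..pi} \<longrightarrow> 0 \<le> f x"
proof -
  have [measurable]: "f \<in> borel_measurable borel" using lim by (simp add: fourier_L2_limit_def)
  define Q where "Q = (\<integral>\<^sup>+x\<in>{-pi..pi}. ennreal ((max (- f x) 0)\<^sup>2) \<partial>lborel)"
  \<comment> \<open>the Fejer means are nonnegative, so they are closer to f than 0 wherever \<open>f < 0\<close>\<close>
  have "Q \<le> (\<integral>\<^sup>+x\<in>{-pi..pi}.
      ennreal ((cmod (trig_poly (fejer_coeffs N a) N x - complex_of_real (f x)))\<^sup>2) \<partial>lborel)"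
    if N: "N \<ge> 1" for N
    unfolding Q_def
  proof (intro nn_integral_mono)
    fix x
    define t where "t = Re (trig_poly (fejer_coeffs N a) N x)"
    have "trig_poly (fejer_coeffs N a) N x = complex_of_real t"
      unfolding t_def by (rule trig_poly_real) (simp add: fejer_coeffs_def even)
    moreover have "(max (- f x) 0)\<^sup>2 \<le> (t - f x)\<^sup>2"
    proof (cases "f x \<ge> 0")
      case False
      moreover have "0 \<le> t" using Re_trig_poly_fejer_coeffs_nonneg[OF pd N] by (simp add: t_def)
      ultimately show ?thesis using power_mono[of "- f x" "t - f x" 2] by simp
    qed simp
    ultimately show "ennreal ((max (- f x) 0)\<^sup>2) * indicator {-pi..pi} x \<le>
        ennreal ((cmod (trig_poly (fejer_coeffs N a) N x - complex_of_real (f x)))\<^sup>2) *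
          indicator {-pi..pi} x"
      by (auto intro!: ennreal_leI split: split_indicator simp flip: of_real_diff)
  qed
  then have "Q \<le> 0"
    by (intro tendsto_le[OF trivial_limit_sequentially fourier_L2_limit_fejer_tendsto[OF assms(1-3)]
        tendsto_const]) (auto simp: eventually_sequentially)
  then have "Q = 0" by simp
  then have "AE x in lborel. ennreal ((max (- f x) 0)\<^sup>2) * indicator {-pi..pi} x = 0"
    unfolding Q_def by (subst (asm) nn_integral_0_iff_AE) auto
  then show ?thesis
    by eventually_elim (auto split: split_indicator if_splits simp: max_def)
qed

section \<open>Existence of spectral densities\<close>

lemma spectral_density_max_0:
  fixes c :: "int \<Rightarrow> real" and f :: "real \<Rightarrow> real"
  assumes [measurable]: "f \<in> borel_measurable borel"
    and integrable: "set_integrable lborel {-pi..pi} f"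
    and nonneg: "AE x in lborel. x \<in> {-pi..pi} \<longrightarrow> 0 \<le> f x"
    and coeff: "\<And>h. complex_of_real (c h) =
      (\<integral>x\<in>{-pi..pi}. cis (real_of_int h * x) * complex_of_real (f x) \<partial>lborel)"
  shows "spectral_density c (\<lambda>x. max (f x) 0)"
proof -
  have ae: "AE x in lborel. x \<in> {-pi..pi} \<longrightarrow> f x = max (f x) 0"
    using nonneg by eventually_elim auto
  have "set_integrable lborel {-pi..pi} (\<lambda>x. max (f x) 0)"
    using set_integrable_cong_AE[OF _ _ ae] integrable by auto
  moreover have "(\<integral>x\<in>{-pi..pi}. cis (real_of_int h * x) * complex_of_real (f x) \<partial>lborel) =
      (\<integral>x\<in>{-pi..pi}. cis (real_of_int h * x) * complex_of_real (max (f x) 0) \<partial>lborel)" for h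
    by (rule set_lebesgue_integral_cong_AE) (use ae in \<open>auto elim!: eventually_mono\<close>)
  ultimately show ?thesis
    unfolding spectral_density_def using coeff by auto
qed

lemma spectral_density_exists:
  fixes c :: "int \<Rightarrow> real"
  assumes even: "\<And>h. c (-h) = c h" and sq: "summable (\<lambda>n. (c (int n))\<^sup>2)"
    and pd: "cis_positive_definite c"
  obtains f where "spectral_density c f"
    and "(\<lambda>N. \<integral>\<^sup>+x\<in>{-pi..pi}.
      ennreal ((cmod (trig_poly (\<lambda>h. c h / (2*pi)) N x - complex_of_real (f x)))\<^sup>2) \<partial>lborel)
      \<longlonglongrightarrow> 0"
proof -
  define a where "a h = c h / (2*pi)" for h
  have even_a: "a (-h) = a h" for h by (simp add: a_def even)
  have sq_a: "summable (\<lambda>n. (a (int n))\<^sup>2)"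
    unfolding a_def using summable_mult[OF sq, of "(1/(2*pi))\<^sup>2"]
    by (simp add: power_divide field_simps)
  have pd_a: "cis_positive_definite a"
    unfolding a_def by (rule cis_positive_definite_divide[OF pd]) simp
  obtain f0 where lim: "fourier_L2_limit a f0" using riesz_fischer[OF even_a sq_a] by blast
  have [measurable]: "f0 \<in> borel_measurable borel" using lim by (simp add: fourier_L2_limit_def)
  have nonneg: "AE x in lborel. x \<in> {-pi..pi} \<longrightarrow> 0 \<le> f0 x"
    by (rule fourier_L2_limit_nonneg[OF lim even_a sq_a pd_a])
  have "spectral_density c (\<lambda>x. max (f0 x) 0)"
  proof (rule spectral_density_max_0[OF _ fourier_L2_limit_set_integrable[OF lim even_a sq_a] nonneg])
    show "complex_of_real (c h) =
        (\<integral>x\<in>{-pi..pi}. cis (real_of_int h * x) * complex_of_real (f0 x) \<partial>lborel)" for h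
      using fourier_L2_limit_coeff[OF lim even_a sq_a, of h] by (simp add: a_def)
  qed simp
  moreover have "(\<lambda>N. \<integral>\<^sup>+x\<in>{-pi..pi}.
      ennreal ((cmod (trig_poly a N x - complex_of_real (max (f0 x) 0)))\<^sup>2) \<partial>lborel) \<longlonglongrightarrow> 0"
  proof -
    have "(\<integral>\<^sup>+x\<in>{-pi..pi}. ennreal ((cmod (trig_poly a N x - complex_of_real (max (f0 x) 0)))\<^sup>2)
        \<partial>lborel) = (\<integral>\<^sup>+x\<in>{-pi..pi}. ennreal ((cmod (trig_poly a N x - complex_of_real (f0 x)))\<^sup>2)
        \<partial>lborel)" for N
      by (intro nn_integral_cong_AE) (use nonneg in \<open>auto split: split_indicator\<close>)
    then show ?thesis
      using fourier_L2_limit_tendsto[OF lim even_a sq_a] by simp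
  qed
  ultimately show ?thesis using that unfolding a_def by blast
qed

section \<open>Covariances of a second-order stationary process\<close>

definition centered :: "'a measure \<Rightarrow> (nat \<Rightarrow> 'a \<Rightarrow> real) \<Rightarrow> nat \<Rightarrow> 'a \<Rightarrow> real" where
  "centered M X n \<omega> = X n \<omega> - integral\<^sup>L M (X n)"

lemma second_order_stationary_centered:
  assumes sos: "second_order_stationary M X"
  shows "centered M X n \<in> borel_measurable M"
    and "integrable M (\<lambda>\<omega>. (centered M X n \<omega>)\<^sup>2)"
    and "integrable M (\<lambda>\<omega>. centered M X a \<omega> * centered M X b \<omega>)"
proof -
  interpret prob_space M using sos by (simp add: second_order_stationary_def)
  have [measurable]: "X n \<in> borel_measurable M" for n
    using sos by (simp add: second_order_stationary_def)
  have X2: "integrable M (\<lambda>\<omega>. (X n \<omega>)\<^sup>2)" for n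
    using sos by (simp add: second_order_stationary_def)
  have X1: "integrable M (X n)" for n
    by (rule square_integrable_imp_integrable[OF _ X2]) simp
  show [measurable]: "centered M X n \<in> borel_measurable M" for n
    unfolding centered_def by measurable
  show Y2: "integrable M (\<lambda>\<omega>. (centered M X n \<omega>)\<^sup>2)" for n
  proof -
    have "(\<lambda>\<omega>. (centered M X n \<omega>)\<^sup>2) =
        (\<lambda>\<omega>. (X n \<omega>)\<^sup>2 - 2 * integral\<^sup>L M (X n) * X n \<omega> + (integral\<^sup>L M (X n))\<^sup>2)"
      by (auto simp: centered_def power2_eq_square algebra_simps)
    then show ?thesis using X1 X2 by simp
  qed
  show "integrable M (\<lambda>\<omega>. centered M X a \<omega> * centered M X b \<omega>)"
  proof (rule Bochner_Integration.integrable_bound)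
    show "integrable M (\<lambda>\<omega>. ((centered M X a \<omega>)\<^sup>2 + (centered M X b \<omega>)\<^sup>2) / 2)"
      using Y2 by simp
    show "AE \<omega> in M. norm (centered M X a \<omega> * centered M X b \<omega>) \<le>
        norm (((centered M X a \<omega>)\<^sup>2 + (centered M X b \<omega>)\<^sup>2) / 2)"
    proof (intro AE_I2)
      fix \<omega>
      have "0 \<le> (\<bar>centered M X a \<omega>\<bar> - \<bar>centered M X b \<omega>\<bar>)\<^sup>2" by simp
      then show "norm (centered M X a \<omega> * centered M X b \<omega>) \<le>
          norm (((centered M X a \<omega>)\<^sup>2 + (centered M X b \<omega>)\<^sup>2) / 2)"
        by (simp add: power2_eq_square abs_mult algebra_simps)
    qed
  qed measurable
qed

lemma autocov_diff_eq_integral_centered: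
  assumes sos: "second_order_stationary M X"
  shows "autocov M X (int a - int b) = integral\<^sup>L M (\<lambda>\<omega>. centered M X a \<omega> * centered M X b \<omega>)"
proof -
  have stat: "integral\<^sup>L M (\<lambda>\<omega>. centered M X m \<omega> * centered M X (m + h) \<omega>) =
      autocov M X (int h)" for m h
    using sos by (simp add: second_order_stationary_def centered_def autocov_def)
  have ordered: "autocov M X (int a - int b) =
      integral\<^sup>L M (\<lambda>\<omega>. centered M X a \<omega> * centered M X b \<omega>)" if "b \<le> a" for a b
  proof -
    have "autocov M X (int a - int b) = autocov M X (int (a - b))"
      using that by (simp add: of_nat_diff)
    also have "\<dots> = integral\<^sup>L M (\<lambda>\<omega>. centered M X b \<omega> * centered M X (b + (a - b)) \<omega>)"
      by (rule stat[symmetric])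
    finally show ?thesis using that by (simp add: mult.commute)
  qed
  show ?thesis
  proof (cases "b \<le> a")
    case False
    have "autocov M X (int a - int b) = autocov M X (int b - int a)"
      by (simp add: autocov_def abs_minus_commute)
    then show ?thesis using ordered[of a b] False by (simp add: mult.commute)
  qed (rule ordered)
qed

lemma abs_autocov_le:
  assumes sos: "second_order_stationary M X"
  shows "\<bar>autocov M X h\<bar> \<le> autocov M X 0"
proof -
  interpret prob_space M using sos by (simp add: second_order_stationary_def)
  note centered = second_order_stationary_centered[OF sos]
  define k where "k = nat \<bar>h\<bar>"
  let ?Y = "centered M X"
  have "autocov M X h = integral\<^sup>L M (\<lambda>\<omega>. ?Y k \<omega> * ?Y 0 \<omega>)"
    using autocov_diff_eq_integral_centered[OF sos, of k 0] by (simp add: autocov_def k_def)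
  also have "\<bar>\<dots>\<bar> \<le> integral\<^sup>L M (\<lambda>\<omega>. \<bar>?Y k \<omega> * ?Y 0 \<omega>\<bar>)"
    by (rule integral_abs_bound)
  also have "\<dots> \<le> integral\<^sup>L M (\<lambda>\<omega>. ((?Y k \<omega>)\<^sup>2 + (?Y 0 \<omega>)\<^sup>2) / 2)"
  proof (rule integral_mono)
    fix \<omega>
    have "0 \<le> (\<bar>?Y k \<omega>\<bar> - \<bar>?Y 0 \<omega>\<bar>)\<^sup>2" by simp
    then show "\<bar>?Y k \<omega> * ?Y 0 \<omega>\<bar> \<le> ((?Y k \<omega>)\<^sup>2 + (?Y 0 \<omega>)\<^sup>2) / 2"
      by (simp add: power2_eq_square abs_mult algebra_simps)
  qed (use centered in auto)
  also have "\<dots> = (integral\<^sup>L M (\<lambda>\<omega>. ?Y k \<omega> * ?Y k \<omega>) + integral\<^sup>L M (\<lambda>\<omega>. ?Y 0 \<omega> * ?Y 0 \<omega>)) / 2"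
    using centered by (simp add: power2_eq_square)
  also have "\<dots> = autocov M X 0"
    using autocov_diff_eq_integral_centered[OF sos, of k k]
      autocov_diff_eq_integral_centered[OF sos, of 0 0] by simp
  finally show ?thesis .
qed

lemma autocov_cis_positive_definite:
  assumes sos: "second_order_stationary M X"
  shows "cis_positive_definite (autocov M X)"
  unfolding cis_positive_definite_def
proof (intro allI)
  fix N x
  let ?Y = "centered M X"
  note centered = second_order_stationary_centered[OF sos]
  have square: "integral\<^sup>L M (\<lambda>\<omega>. (\<Sum>i<N. u i * ?Y i \<omega>)\<^sup>2) =
      (\<Sum>i<N. \<Sum>j<N. u i * u j * integral\<^sup>L M (\<lambda>\<omega>. ?Y i \<omega> * ?Y j \<omega>))" for u :: "nat \<Rightarrow> real"
  proof -
    have "integral\<^sup>L M (\<lambda>\<omega>. (\<Sum>i<N. u i * ?Y i \<omega>)\<^sup>2) =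
        integral\<^sup>L M (\<lambda>\<omega>. \<Sum>i<N. \<Sum>j<N. u i * u j * (?Y i \<omega> * ?Y j \<omega>))"
      by (intro Bochner_Integration.integral_cong refl)
        (simp add: power2_eq_square sum_product algebra_simps)
    also have "\<dots> = (\<Sum>i<N. \<Sum>j<N. u i * u j * integral\<^sup>L M (\<lambda>\<omega>. ?Y i \<omega> * ?Y j \<omega>))"
      using centered(3) by (simp add: integrable_sum)
    finally show ?thesis .
  qed
  have "Re (\<Sum>i<N. \<Sum>j<N. complex_of_real (autocov M X (int i - int j)) *
      cis (real_of_int (int i - int j) * x))
    = (\<Sum>i<N. \<Sum>j<N. integral\<^sup>L M (\<lambda>\<omega>. ?Y i \<omega> * ?Y j \<omega>) *
        (cos (real i * x) * cos (real j * x) + sin (real i * x) * sin (real j * x)))"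
    by (simp add: Re_sum autocov_diff_eq_integral_centered[OF sos] cos_diff algebra_simps)
  also have "\<dots> = integral\<^sup>L M (\<lambda>\<omega>. (\<Sum>i<N. cos (real i * x) * ?Y i \<omega>)\<^sup>2) +
      integral\<^sup>L M (\<lambda>\<omega>. (\<Sum>i<N. sin (real i * x) * ?Y i \<omega>)\<^sup>2)"
    unfolding square by (simp add: sum.distrib[symmetric] algebra_simps)
  also have "\<dots> \<ge> 0" by (intro add_nonneg_nonneg integral_nonneg) auto
  finally show "0 \<le> Re (\<Sum>i<N. \<Sum>j<N. complex_of_real (autocov M X (int i - int j)) *
      cis (real_of_int (int i - int j) * x))" .
qed

section \<open>The spectral representation of the sampled covariances\<close>

lemma summable_norm_pmf_mult:
  fixes g :: "nat \<Rightarrow> complex"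
  assumes "\<And>k. cmod (g k) \<le> 1"
  shows "summable (\<lambda>k. cmod (complex_of_real (pmf p k) * g k))"
  using expectation_pmf_nat_bounded(2)[of g 1 p] assms by (simp add: scaleR_conv_of_real)

lemma char_fun_S_power:
  "char_fun_S S \<theta> ^ n = (\<Sum>k. complex_of_real (pmf (walk_law S n) k) * cis (real k * \<theta>))"
proof (induction n)
  case 0
  have "(\<Sum>k. complex_of_real (pmf (walk_law S 0) k) * cis (real k * \<theta>)) = (\<Sum>k. if k = 0 then 1 else 0)"
    by (intro suminf_cong) (simp add: pmf_return)
  also have "\<dots> = 1" by (subst suminf_finite[of "{0}"]) auto
  finally show ?case by simp
next
  case (Suc n)
  let ?a = "\<lambda>k. complex_of_real (pmf S k) * cis (real k * \<theta>)"
  let ?b = "\<lambda>k. complex_of_real (pmf (walk_law S n) k) * cis (real k * \<theta>)"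
  have "char_fun_S S \<theta> ^ Suc n = (\<Sum>k. ?a k) * (\<Sum>k. ?b k)"
    using Suc by (simp add: char_fun_S_def)
  also have "\<dots> = (\<Sum>k. \<Sum>i\<le>k. ?a i * ?b (k - i))"
    by (rule Cauchy_product; rule summable_norm_pmf_mult) simp_all
  also have "\<dots> = (\<Sum>k. complex_of_real (pmf (walk_law S (Suc n)) k) * cis (real k * \<theta>))"
  proof (intro suminf_cong)
    fix k
    have "(\<Sum>i\<le>k. ?a i * ?b (k - i)) =
        (\<Sum>i\<le>k. complex_of_real (pmf S i * pmf (walk_law S n) (k - i)) * cis (real k * \<theta>))"
    proof (intro sum.cong refl)
      fix i
      assume "i \<in> {..k}"
      then have "cis (real i * \<theta>) * cis (real (k - i) * \<theta>) = cis (real k * \<theta>)"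
        by (simp add: cis_mult of_nat_diff algebra_simps)
      then show "?a i * ?b (k - i) =
          complex_of_real (pmf S i * pmf (walk_law S n) (k - i)) * cis (real k * \<theta>)"
        by (simp add: mult_ac)
    qed
    then show "(\<Sum>i\<le>k. ?a i * ?b (k - i)) =
        complex_of_real (pmf (walk_law S (Suc n)) k) * cis (real k * \<theta>)"
      by (simp add: pmf_walk_law_Suc sum_distrib_right)
  qed
  finally show ?case .
qed

lemma norm_char_fun_S_le_1: "cmod (char_fun_S S \<theta>) \<le> 1"
proof -
  have "summable (\<lambda>k. cmod (complex_of_real (pmf S k) * cis (real k * \<theta>)))"
    by (rule summable_norm_pmf_mult) simp
  then have "cmod (char_fun_S S \<theta>) \<le> (\<Sum>k. cmod (complex_of_real (pmf S k) * cis (real k * \<theta>)))"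
    unfolding char_fun_S_def by (rule summable_norm)
  also have "\<dots> = (\<Sum>k. pmf S k *\<^sub>R (1::real))" by (simp add: norm_mult)
  also have "\<dots> = measure_pmf.expectation S (\<lambda>_. 1::real)"
    by (rule expectation_pmf_nat_bounded(1)[where B=1, symmetric]) simp
  finally show ?thesis by simp
qed

lemma borel_measurable_char_fun_S[measurable]: "char_fun_S S \<in> borel_measurable borel"
proof -
  have "char_fun_S S = (\<lambda>\<theta>. lim (\<lambda>n. \<Sum>k<n. complex_of_real (pmf S k) * cis (real k * \<theta>)))"
    unfolding char_fun_S_def by (simp add: suminf_eq_lim fun_eq_iff)
  also have "\<dots> \<in> borel_measurable borel"
    by (intro borel_measurable_lim_metric borel_measurable_continuous_onI continuous_intros)
  finally show ?thesis .
qed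

lemma set_integral_pmf_series:
  fixes f :: "real \<Rightarrow> real"
  assumes f: "set_integrable lborel A f" and [measurable]: "A \<in> sets borel"
  shows "(\<integral>\<theta>\<in>A. (\<Sum>k. complex_of_real (pmf p k) * cis (real k * \<theta>)) * complex_of_real (f \<theta>) \<partial>lborel) =
    (\<Sum>k. complex_of_real (pmf p k) * (\<integral>\<theta>\<in>A. cis (real k * \<theta>) * complex_of_real (f \<theta>) \<partial>lborel))"
proof -
  define F where "F k \<theta> = complex_of_real (pmf p k) *
    (indicator A \<theta> *\<^sub>R (cis (real k * \<theta>) * complex_of_real (f \<theta>)))" for k \<theta>
  have F_integrable: "integrable lborel (F k)" for k
    using set_integrable_bounded_mult_of_real[OF f, of "\<lambda>\<theta>. cis (real k * \<theta>)"]
    unfolding F_def set_integrable_def by (intro integrable_mult_right) simp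
  have norm_F: "norm (F k \<theta>) = pmf p k * norm (indicator A \<theta> *\<^sub>R f \<theta>)" for k \<theta>
    by (simp add: F_def norm_mult split: split_indicator)
  have pmf_summable: "summable (pmf p)"
    using expectation_pmf_nat_bounded(2)[of "\<lambda>_. 1::real" 1 p] by simp
  have "(\<integral>\<theta>\<in>A. (\<Sum>k. complex_of_real (pmf p k) * cis (real k * \<theta>)) * complex_of_real (f \<theta>) \<partial>lborel) =
      (\<integral>\<theta>. (\<Sum>k. F k \<theta>) \<partial>lborel)"
    unfolding set_lebesgue_integral_def F_def
  proof (intro Bochner_Integration.integral_cong refl)
    fix \<theta>
    have "summable (\<lambda>k. complex_of_real (pmf p k) * cis (real k * \<theta>))"
      by (rule summable_norm_cancel, rule summable_norm_pmf_mult) simp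
    then show "indicator A \<theta> *\<^sub>R ((\<Sum>k. complex_of_real (pmf p k) * cis (real k * \<theta>)) *
        complex_of_real (f \<theta>)) = (\<Sum>k. complex_of_real (pmf p k) *
        (indicator A \<theta> *\<^sub>R (cis (real k * \<theta>) * complex_of_real (f \<theta>))))"
      by (cases "\<theta> \<in> A") (simp_all add: suminf_mult2 mult.assoc)
  qed
  also have "\<dots> = (\<Sum>k. integral\<^sup>L lborel (F k))"
    by (rule integral_suminf[OF F_integrable])
      (simp_all add: norm_F summable_mult2 pmf_summable)
  also have "\<dots> = (\<Sum>k. complex_of_real (pmf p k) *
      (\<integral>\<theta>\<in>A. cis (real k * \<theta>) * complex_of_real (f \<theta>) \<partial>lborel))"
    unfolding F_def set_lebesgue_integral_def by (simp only: integral_mult_right_zero)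
  finally show ?thesis .
qed

lemma sampled_cov_spectral:
  fixes \<sigma> :: "int \<Rightarrow> real" and fX :: "real \<Rightarrow> real"
  assumes sd: "spectral_density \<sigma> fX" and bnd: "\<And>h. \<bar>\<sigma> h\<bar> \<le> B"
  shows "complex_of_real (sampled_cov \<sigma> S j) =
    (\<integral>\<theta>\<in>{-pi..pi}. char_fun_S S \<theta> ^ nat \<bar>j\<bar> * complex_of_real (fX \<theta>) \<partial>lborel)"
proof (cases "j = 0")
  case True
  then show ?thesis using sd by (simp add: sampled_cov_def spectral_density_def)
next
  case False
  let ?p = "walk_law S (nat \<bar>j\<bar>)"
  have "(\<integral>\<theta>\<in>{-pi..pi}. char_fun_S S \<theta> ^ nat \<bar>j\<bar> * complex_of_real (fX \<theta>) \<partial>lborel) =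
      (\<Sum>k. complex_of_real (pmf ?p k) * complex_of_real (\<sigma> (int k)))"
    using sd unfolding char_fun_S_power spectral_density_def
    by (subst set_integral_pmf_series) auto
  also have "\<dots> = complex_of_real (\<Sum>k. pmf ?p k * \<sigma> (int k))"
  proof -
    have "summable (\<lambda>k. pmf ?p k * \<sigma> (int k))"
      using expectation_pmf_nat_bounded(2)[of "\<lambda>k. \<sigma> (int k)" B ?p] bnd
      by (auto intro: summable_norm_cancel)
    then show ?thesis
      by (simp add: suminf_of_real[symmetric] of_real_mult[symmetric] del: of_real_mult)
  qed
  also have "(\<Sum>k. pmf ?p k * \<sigma> (int k)) = sampled_cov \<sigma> S j"
    using expectation_pmf_nat_bounded(1)[of "\<lambda>k. \<sigma> (int k)" B ?p] bnd False
    by (simp add: sampled_cov_def)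
  finally show ?thesis by simp
qed

lemma fY_partial_eq_trig_poly:
  fixes \<sigma> :: "int \<Rightarrow> real" and fX :: "real \<Rightarrow> real"
  assumes sd: "spectral_density \<sigma> fX" and bnd: "\<And>h. \<bar>\<sigma> h\<bar> \<le> B"
  shows "fY_partial S fX N t = trig_poly (\<lambda>h. sampled_cov \<sigma> S h / (2*pi)) N t"
proof -
  let ?c = "sampled_cov \<sigma> S"
  have "fY_partial S fX N t = complex_of_real (1 / (2 * pi)) *
      (\<Sum>j\<in>{-int N..int N}. cis (- real_of_int j * t) * complex_of_real (?c j))"
    unfolding fY_partial_def using sampled_cov_spectral[OF sd bnd, of S] by simp
  also have "\<dots> = (\<Sum>j\<in>{-int N..int N}. complex_of_real (?c j / (2*pi)) * cis (- real_of_int j * t))"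
    by (simp add: sum_distrib_left mult_ac)
  also have "\<dots> = trig_poly (\<lambda>h. ?c h / (2*pi)) N t"
    unfolding trig_poly_def
    by (rule sum.reindex_bij_witness[where i=uminus and j=uminus]) (auto simp: sampled_cov_even)
  finally show ?thesis .
qed

section \<open>Positive definiteness of the sampled covariances\<close>

definition power_toeplitz :: "complex \<Rightarrow> nat \<Rightarrow> nat \<Rightarrow> complex" where
  "power_toeplitz z a b = (if b \<le> a then z ^ (a - b) else cnj z ^ (b - a))"

text \<open>
  The weights of the rank-one decomposition of \<open>power_toeplitz z\<close> proved below; they are
  nonnegative for \<open>|z| \<le> 1\<close>.\<close>

definition toeplitz_weight :: "complex \<Rightarrow> nat \<Rightarrow> real" where
  "toeplitz_weight z k = (if k = 0 then 1 else 1 - (cmod z)\<^sup>2)"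

lemma sum_toeplitz_weight: "(\<Sum>k\<le>b. toeplitz_weight z k * ((cmod z)\<^sup>2) ^ (b - k)) = 1"
proof (induction b)
  case 0
  then show ?case by (simp add: toeplitz_weight_def)
next
  case (Suc b)
  have "(\<Sum>k\<le>b. toeplitz_weight z k * ((cmod z)\<^sup>2) ^ (Suc b - k)) =
      (cmod z)\<^sup>2 * (\<Sum>k\<le>b. toeplitz_weight z k * ((cmod z)\<^sup>2) ^ (b - k))"
    unfolding sum_distrib_left by (intro sum.cong refl) (simp add: Suc_diff_le mult_ac)
  then show ?case using Suc by (simp add: toeplitz_weight_def)
qed

lemma power_eq_sum_toeplitz_weight:
  assumes "b \<le> a"
  shows "z ^ (a - b) = (\<Sum>k\<le>b. complex_of_real (toeplitz_weight z k) * z ^ (a - k) * cnj z ^ (b - k))"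
proof -
  have "complex_of_real (toeplitz_weight z k) * z ^ (a - k) * cnj z ^ (b - k) =
      z ^ (a - b) * complex_of_real (toeplitz_weight z k * ((cmod z)\<^sup>2) ^ (b - k))" if "k \<le> b" for k
  proof -
    have "z ^ (a - k) = z ^ (a - b) * z ^ (b - k)"
      using that assms by (simp add: power_add[symmetric])
    moreover have "z * cnj z = complex_of_real ((cmod z)\<^sup>2)"
      by (simp only: complex_norm_square)
    then have "z ^ (b - k) * cnj z ^ (b - k) = complex_of_real (((cmod z)\<^sup>2) ^ (b - k))"
      by (simp only: power_mult_distrib[symmetric] of_real_power)
    ultimately show ?thesis by (simp add: mult_ac)
  qed
  then have "(\<Sum>k\<le>b. complex_of_real (toeplitz_weight z k) * z ^ (a - k) * cnj z ^ (b - k)) =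
      (\<Sum>k\<le>b. z ^ (a - b) * complex_of_real (toeplitz_weight z k * ((cmod z)\<^sup>2) ^ (b - k)))"
    by (intro sum.cong refl) auto
  also have "\<dots> = z ^ (a - b) * complex_of_real (\<Sum>k\<le>b. toeplitz_weight z k * ((cmod z)\<^sup>2) ^ (b - k))"
    by (simp add: sum_distrib_left)
  finally show ?thesis by (simp add: sum_toeplitz_weight)
qed

lemma power_toeplitz_eq_sum:
  "power_toeplitz z a b =
    (\<Sum>k\<le>min a b. complex_of_real (toeplitz_weight z k) * z ^ (a - k) * cnj z ^ (b - k))"
proof (cases "b \<le> a")
  case True
  then show ?thesis using power_eq_sum_toeplitz_weight[OF True, of z] by (simp add: power_toeplitz_def)
next
  case False
  then have "cnj z ^ (b - a) = cnj (z ^ (b - a))" by simp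
  also have "\<dots> = cnj (\<Sum>k\<le>a. complex_of_real (toeplitz_weight z k) * z ^ (b - k) * cnj z ^ (a - k))"
    using power_eq_sum_toeplitz_weight[of a b z] False by simp
  also have "\<dots> = (\<Sum>k\<le>a. complex_of_real (toeplitz_weight z k) * z ^ (a - k) * cnj z ^ (b - k))"
    by (simp add: mult_ac)
  finally show ?thesis using False by (simp add: power_toeplitz_def min_def)
qed

lemma power_toeplitz_quadratic_form:
  "(\<Sum>a<N. \<Sum>b<N. power_toeplitz z a b * (w a * cnj (w b))) =
    complex_of_real (\<Sum>k<N. toeplitz_weight z k *
      (cmod (\<Sum>a<N. if k \<le> a then z ^ (a - k) * w a else 0))\<^sup>2)"
proof -
  define A where "A k a = (if k \<le> a then z ^ (a - k) * w a else 0)" for k a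
  have "power_toeplitz z a b * (w a * cnj (w b)) =
      (\<Sum>k<N. complex_of_real (toeplitz_weight z k) * (A k a * cnj (A k b)))"
    if "a < N" "b < N" for a b
  proof -
    have "{..min a b} = {k\<in>{..<N}. k \<le> a \<and> k \<le> b}" using that by auto
    then have "power_toeplitz z a b = (\<Sum>k\<in>{k\<in>{..<N}. k \<le> a \<and> k \<le> b}.
        complex_of_real (toeplitz_weight z k) * z ^ (a - k) * cnj z ^ (b - k))"
      by (simp only: power_toeplitz_eq_sum)
    also have "\<dots> = (\<Sum>k<N. if k \<le> a \<and> k \<le> b then
        complex_of_real (toeplitz_weight z k) * z ^ (a - k) * cnj z ^ (b - k) else 0)"
      by (rule sum.inter_filter) simp
    finally have toeplitz: "power_toeplitz z a b = (\<Sum>k<N. if k \<le> a \<and> k \<le> b then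
        complex_of_real (toeplitz_weight z k) * z ^ (a - k) * cnj z ^ (b - k) else 0)" .
    show ?thesis
      unfolding toeplitz sum_distrib_right by (intro sum.cong refl) (auto simp: A_def mult_ac)
  qed
  then have "(\<Sum>a<N. \<Sum>b<N. power_toeplitz z a b * (w a * cnj (w b))) =
      (\<Sum>a<N. \<Sum>b<N. \<Sum>k<N. complex_of_real (toeplitz_weight z k) * (A k a * cnj (A k b)))"
    by (intro sum.cong refl) auto
  also have "\<dots> = (\<Sum>a<N. \<Sum>k<N. \<Sum>b<N. complex_of_real (toeplitz_weight z k) * (A k a * cnj (A k b)))"
    by (rule sum.cong[OF refl], rule sum.swap)
  also have "\<dots> = (\<Sum>k<N. \<Sum>a<N. \<Sum>b<N. complex_of_real (toeplitz_weight z k) * (A k a * cnj (A k b)))"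
    by (rule sum.swap)
  also have "\<dots> = (\<Sum>k<N. complex_of_real (toeplitz_weight z k) *
      ((\<Sum>a<N. A k a) * cnj (\<Sum>a<N. A k a)))"
    unfolding cnj_sum sum_product by (simp add: sum_distrib_left)
  finally show ?thesis by (simp only: A_def complex_norm_square of_real_sum of_real_mult)
qed

lemma power_toeplitz_positive_semidefinite:
  assumes "cmod z \<le> 1"
  shows "0 \<le> Re (\<Sum>a<N. \<Sum>b<N. power_toeplitz z a b * (w a * cnj (w b)))"
proof -
  have "0 \<le> toeplitz_weight z k" for k
    using assms by (auto simp: toeplitz_weight_def abs_le_square_iff[symmetric] intro: power_le_one)
  then show ?thesis
    unfolding power_toeplitz_quadratic_form Re_complex_of_real by (simp add: sum_nonneg)
qed

lemma cos_power_form_nonneg: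
  assumes "cmod z \<le> 1"
  shows "0 \<le> (\<Sum>a<N. \<Sum>b<N. Re (z ^ nat \<bar>int a - int b\<bar>) * cos (real_of_int (int a - int b) * x))"
proof -
  define w where "w a = cis (real a * x)" for a
  have Re_toeplitz: "Re (power_toeplitz z a b) = Re (z ^ nat \<bar>int a - int b\<bar>)" for a b
  proof (cases "b \<le> a")
    case False
    then have "nat \<bar>int a - int b\<bar> = b - a" by simp
    moreover have "Re (cnj z ^ (b - a)) = Re (z ^ (b - a))"
      by (metis complex_cnj_power cnj.sel(1))
    ultimately show ?thesis using False by (simp add: power_toeplitz_def)
  qed (simp add: power_toeplitz_def nat_diff_distrib')
  \<comment> \<open>\<open>Re (z ^ |a - b|)\<close> is the mean of the Hermitian Toeplitz matrices of z and of \<open>cnj z\<close>\<close>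
  have "Re (power_toeplitz z a b * (w a * cnj (w b))) + Re (power_toeplitz (cnj z) a b * (w a * cnj (w b))) =
      2 * (Re (z ^ nat \<bar>int a - int b\<bar>) * cos (real_of_int (int a - int b) * x))" for a b
  proof -
    have "w a * cnj (w b) = cis (real_of_int (int a - int b) * x)"
      by (simp add: w_def cis_cnj cis_mult algebra_simps)
    moreover have "power_toeplitz (cnj z) a b = cnj (power_toeplitz z a b)"
      by (simp add: power_toeplitz_def)
    ultimately show ?thesis by (simp add: Re_toeplitz[symmetric] algebra_simps)
  qed
  then have "2 * (\<Sum>a<N. \<Sum>b<N. Re (z ^ nat \<bar>int a - int b\<bar>) * cos (real_of_int (int a - int b) * x)) =
      Re (\<Sum>a<N. \<Sum>b<N. power_toeplitz z a b * (w a * cnj (w b))) +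
      Re (\<Sum>a<N. \<Sum>b<N. power_toeplitz (cnj z) a b * (w a * cnj (w b)))"
    by (simp add: Re_sum sum.distrib[symmetric] sum_distrib_left)
  moreover have "0 \<le> Re (\<Sum>a<N. \<Sum>b<N. power_toeplitz z a b * (w a * cnj (w b)))"
    "0 \<le> Re (\<Sum>a<N. \<Sum>b<N. power_toeplitz (cnj z) a b * (w a * cnj (w b)))"
    by (rule power_toeplitz_positive_semidefinite, simp add: assms)+
  ultimately show ?thesis by linarith
qed

lemma sampled_cov_eq_integral_Re:
  fixes \<sigma> :: "int \<Rightarrow> real" and fX :: "real \<Rightarrow> real"
  assumes sd: "spectral_density \<sigma> fX" and bnd: "\<And>h. \<bar>\<sigma> h\<bar> \<le> B"
  shows "integrable lborel (\<lambda>\<theta>. indicator {-pi..pi} \<theta> * (Re (char_fun_S S \<theta> ^ n) * fX \<theta>))"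
    and "sampled_cov \<sigma> S j =
      integral\<^sup>L lborel (\<lambda>\<theta>. indicator {-pi..pi} \<theta> * (Re (char_fun_S S \<theta> ^ nat \<bar>j\<bar>) * fX \<theta>))"
proof -
  have integrable: "set_integrable lborel {-pi..pi} (\<lambda>\<theta>. char_fun_S S \<theta> ^ n * complex_of_real (fX \<theta>))"
    for n
    using sd unfolding spectral_density_def
    by (intro set_integrable_bounded_mult_of_real)
      (auto simp: norm_power intro: power_le_one norm_char_fun_S_le_1)
  have Re_eq: "(\<lambda>\<theta>. Re (indicator {-pi..pi} \<theta> *\<^sub>R (char_fun_S S \<theta> ^ n * complex_of_real (fX \<theta>)))) =
      (\<lambda>\<theta>. indicator {-pi..pi} \<theta> * (Re (char_fun_S S \<theta> ^ n) * fX \<theta>))" for n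
    by (auto split: split_indicator)
  show "integrable lborel (\<lambda>\<theta>. indicator {-pi..pi} \<theta> * (Re (char_fun_S S \<theta> ^ n) * fX \<theta>))"
    using integrable_Re[OF integrable[of n, unfolded set_integrable_def]] by (simp add: Re_eq)
  have "sampled_cov \<sigma> S j = Re (\<integral>\<theta>\<in>{-pi..pi}. char_fun_S S \<theta> ^ nat \<bar>j\<bar> * complex_of_real (fX \<theta>) \<partial>lborel)"
    using sampled_cov_spectral[OF sd bnd, of S j] by (metis Re_complex_of_real)
  also have "\<dots> = integral\<^sup>L lborel (\<lambda>\<theta>. Re (indicator {-pi..pi} \<theta> *\<^sub>R
      (char_fun_S S \<theta> ^ nat \<bar>j\<bar> * complex_of_real (fX \<theta>))))"
    unfolding set_lebesgue_integral_def
    by (rule integral_Re[symmetric]) (use integrable in \<open>simp add: set_integrable_def\<close>)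
  finally show "sampled_cov \<sigma> S j =
      integral\<^sup>L lborel (\<lambda>\<theta>. indicator {-pi..pi} \<theta> * (Re (char_fun_S S \<theta> ^ nat \<bar>j\<bar>) * fX \<theta>))"
    by (simp only: Re_eq)
qed

lemma sampled_cov_cis_positive_definite:
  fixes \<sigma> :: "int \<Rightarrow> real" and fX :: "real \<Rightarrow> real"
  assumes sd: "spectral_density \<sigma> fX" and bnd: "\<And>h. \<bar>\<sigma> h\<bar> \<le> B"
  shows "cis_positive_definite (sampled_cov \<sigma> S)"
  unfolding cis_positive_definite_def
proof (intro allI)
  fix N x
  let ?\<Phi> = "char_fun_S S"
  define T where "T a b \<theta> = indicator {-pi..pi} \<theta> * (Re (?\<Phi> \<theta> ^ nat \<bar>int a - int b\<bar>) * fX \<theta>) *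
    cos (real_of_int (int a - int b) * x)" for a b :: nat and \<theta>
  have T_integrable: "integrable lborel (T a b)" for a b
    unfolding T_def using sampled_cov_eq_integral_Re(1)[OF sd bnd] by simp
  have "Re (complex_of_real (sampled_cov \<sigma> S (int a - int b)) * cis (real_of_int (int a - int b) * x)) =
      integral\<^sup>L lborel (T a b)" for a b
    unfolding T_def sampled_cov_eq_integral_Re(2)[OF sd bnd] by simp
  then have "Re (\<Sum>a<N. \<Sum>b<N. complex_of_real (sampled_cov \<sigma> S (int a - int b)) *
      cis (real_of_int (int a - int b) * x)) = (\<Sum>a<N. \<Sum>b<N. integral\<^sup>L lborel (T a b))"
    by (simp only: Re_sum)
  also have "\<dots> = integral\<^sup>L lborel (\<lambda>\<theta>. \<Sum>a<N. \<Sum>b<N. T a b \<theta>)"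
    using T_integrable by (simp add: Bochner_Integration.integral_sum integrable_sum)
  also have "\<dots> = integral\<^sup>L lborel (\<lambda>\<theta>. indicator {-pi..pi} \<theta> * fX \<theta> *
      (\<Sum>a<N. \<Sum>b<N. Re (?\<Phi> \<theta> ^ nat \<bar>int a - int b\<bar>) * cos (real_of_int (int a - int b) * x)))"
    by (simp add: T_def sum_distrib_left mult_ac)
  also have "\<dots> \<ge> 0"
  proof (intro Bochner_Integration.integral_nonneg)
    fix \<theta>
    have "\<theta> \<in> {-pi..pi} \<Longrightarrow> 0 \<le> fX \<theta>" using sd by (simp add: spectral_density_def)
    then show "0 \<le> indicator {-pi..pi} \<theta> * fX \<theta> *
        (\<Sum>a<N. \<Sum>b<N. Re (?\<Phi> \<theta> ^ nat \<bar>int a - int b\<bar>) * cos (real_of_int (int a - int b) * x))"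
      using cos_power_form_nonneg[OF norm_char_fun_S_le_1] by (simp split: split_indicator)
  qed
  finally show "0 \<le> Re (\<Sum>a<N. \<Sum>b<N. complex_of_real (sampled_cov \<sigma> S (int a - int b)) *
      cis (real_of_int (int a - int b) * x))" .
qed

lemma square_summable_if_powr_summable:
  fixes c :: "int \<Rightarrow> real"
  assumes bnd: "\<And>h. \<bar>c h\<bar> \<le> B" and p: "1 \<le> p" "p \<le> 2"
    and sum: "(\<lambda>h. \<bar>c h\<bar> powr p) summable_on UNIV"
  shows "summable (\<lambda>n. (c (int n))\<^sup>2)"
proof (rule summable_comparison_test')
  show "summable (\<lambda>n. B powr (2 - p) * \<bar>c (int n)\<bar> powr p)"
    by (rule summable_mult) (rule summable_on_int_imp_summable_nat[OF sum])
  fix n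
  show "norm ((c (int n))\<^sup>2) \<le> B powr (2 - p) * \<bar>c (int n)\<bar> powr p"
  proof (cases "c (int n) = 0")
    case False
    then have "(c (int n))\<^sup>2 = \<bar>c (int n)\<bar> powr (2 - p) * \<bar>c (int n)\<bar> powr p"
      by (simp add: powr_add[symmetric] powr_numeral)
    also have "\<dots> \<le> B powr (2 - p) * \<bar>c (int n)\<bar> powr p"
      using False bnd[of "int n"] p by (intro mult_right_mono powr_mono2) auto
    finally show ?thesis by simp
  qed simp
qed

lemma sampled_cov_spectral_density:
  fixes \<sigma> :: "int \<Rightarrow> real" and fX :: "real \<Rightarrow> real"
  assumes fX: "spectral_density \<sigma> fX" and bnd: "\<And>h. \<bar>\<sigma> h\<bar> \<le> B"
    and sq: "summable (\<lambda>n. (sampled_cov \<sigma> S (int n))\<^sup>2)"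
  obtains fY where "spectral_density (sampled_cov \<sigma> S) fY"
    and "(\<lambda>N. \<integral>\<^sup>+ x\<in>{-pi..pi}. ennreal ((cmod (fY_partial S fX N x - complex_of_real (fY x)))\<^sup>2)
      \<partial>lborel) \<longlonglongrightarrow> 0"
proof -
  obtain fY where fY: "spectral_density (sampled_cov \<sigma> S) fY" and lim: "(\<lambda>N. \<integral>\<^sup>+x\<in>{-pi..pi}.
      ennreal ((cmod (trig_poly (\<lambda>h. sampled_cov \<sigma> S h / (2*pi)) N x - complex_of_real (fY x)))\<^sup>2)
      \<partial>lborel) \<longlonglongrightarrow> 0"
    by (rule spectral_density_exists[OF sampled_cov_even sq sampled_cov_cis_positive_definite[OF fX bnd]])
  from lim have "(\<lambda>N. \<integral>\<^sup>+ x\<in>{-pi..pi}.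
      ennreal ((cmod (fY_partial S fX N x - complex_of_real (fY x)))\<^sup>2) \<partial>lborel) \<longlonglongrightarrow> 0"
    unfolding fY_partial_eq_trig_poly[OF fX bnd] .
  with fY show ?thesis by (rule that)
qed

theorem proposition2p1:
  fixes M :: "'a measure" and X :: "nat \<Rightarrow> 'a \<Rightarrow> real" and S :: "nat pmf" and p :: real
  assumes "second_order_stationary M X"
    and "pmf S 0 = 0"
    and "p \<ge> 1"
    and "(\<lambda>h::int. \<bar>autocov M X h\<bar> powr p) summable_on UNIV"
  shows "(\<lambda>h::int. \<bar>sampled_cov (autocov M X) S h\<bar> powr p) summable_on UNIV
    \<and> (p \<le> 2 \<longrightarrow>
         (\<exists>fX fY. spectral_density (autocov M X) fX
            \<and> spectral_density (sampled_cov (autocov M X) S) fY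
            \<and> ((\<lambda>N. \<integral>\<^sup>+ x\<in>{-pi..pi}. ennreal ((cmod (fY_partial S fX N x - complex_of_real (fY x)))\<^sup>2) \<partial>lborel)
                 \<longlonglongrightarrow> 0)))"
proof -
  let ?\<sigma> = "autocov M X"
  have bnd: "\<bar>?\<sigma> h\<bar> \<le> ?\<sigma> 0" for h by (rule abs_autocov_le[OF assms(1)])
  have sumY: "(\<lambda>h. \<bar>sampled_cov ?\<sigma> S h\<bar> powr p) summable_on UNIV"
    by (rule sampled_cov_powr_summable[OF bnd assms(2-4)])
  moreover have "\<exists>fX fY. spectral_density ?\<sigma> fX \<and> spectral_density (sampled_cov ?\<sigma> S) fY \<and>
      ((\<lambda>N. \<integral>\<^sup>+ x\<in>{-pi..pi}. ennreal ((cmod (fY_partial S fX N x - complex_of_real (fY x)))\<^sup>2)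
        \<partial>lborel) \<longlonglongrightarrow> 0)" if p2: "p \<le> 2"
  proof -
    have "?\<sigma> (-h) = ?\<sigma> h" for h by (simp add: autocov_def)
    then obtain fX where fX: "spectral_density ?\<sigma> fX"
      by (rule spectral_density_exists[OF _ square_summable_if_powr_summable[OF bnd assms(3) p2 assms(4)]
          autocov_cis_positive_definite[OF assms(1)]]) simp
    obtain fY where "spectral_density (sampled_cov ?\<sigma> S) fY" and "(\<lambda>N. \<integral>\<^sup>+ x\<in>{-pi..pi}.
        ennreal ((cmod (fY_partial S fX N x - complex_of_real (fY x)))\<^sup>2) \<partial>lborel) \<longlonglongrightarrow> 0"
      by (rule sampled_cov_spectral_density[OF fX bnd
          square_summable_if_powr_summable[OF abs_sampled_cov_le[OF bnd] assms(3) p2 sumY]])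
    with fX show ?thesis by blast
  qed
  ultimately show ?thesis by blast
qed

end
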